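(* Let $A$ be a closed symmetric relation in $\mathfrak H$, let $\{\mathcal H,\Gamma\}$ be an AB-generalized boundary pair for $A^*$ with components $\Gamma_0,\Gamma_1$, $\gamma$-field $\gamma(\cdot)$ and Weyl family $M(\cdot)$, and $A_*=\operatorname{dom}\Gamma$. Then: (i) $\ker\Gamma=A$; (ii) $A_*=A_0\hat+\widehat{\mathfrak N}_\lambda(A_* )$ and $\widehat{\mathfrak N}_\lambda(A_* )$ is dense in $\widehat{\mathfrak N}_\lambda(A^* )$ for all $\lambda\in\mathbb C\setminus\mathbb R$; (iii) $\gamma(\lambda)$ is a densely defined bounded operator from $\operatorname{ran}\Gamma_0$ onto $\mathfrak N_\lambda(A_* )$, with $\operatorname{dom}\gamma(\lambda)=\operatorname{ran}\Gamma_0$ (independent of $\lambda$) and $\ker\gamma(\lambda)=\operatorname{mul}\Gamma_0$; (iv) $\gamma(\lambda)^*$ is a bounded everywhere defined operator, and for $\lambda\in\mathbb C\setminus\mathbb R$ $\Gamma H(\lambda)=\{\{k,\{0,\gamma(\bar\lambda)^*k\}\}:k\in\mathfrak H\}\hat+(\{0\}\times\operatorname{mul}\Gamma)$, $\Gamma_1H(\lambda)=\gamma(\bar\lambda)^*\hat+(\{0\}\times\operatorname{mul}\Gamma_1)$; (v) the closure $\overline{\gamma(\lambda)}$ is a bounded everywhere defined operator from $\mathcal H$ into $\mathfrak N_\lambda(A^* )$ and $\overline{\gamma(\lambda)}=[I+(\lambda-\mu)(A_0-\lambda)^{-1}]\overline{\gamma(\mu)}$ for $\lambda,\mu\in\mathbb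 C\setminus\mathbb R$; (vi) $M(\lambda)$ is a densely defined operator for each $\lambda\in\mathbb C\setminus\mathbb R$, $\operatorname{dom}M(\lambda)=\operatorname{ran}\Gamma_0$, $M(\lambda)\subset M(\bar\lambda)^*$, the operator $\operatorname{Im}M(\lambda)=(M(\lambda)-M(\lambda)^* )/2i$ (on $\operatorname{ran}\Gamma_0$) is bounded with $\ker\operatorname{Im}M(\lambda)=\operatorname{mul}\Gamma_0$, and for any fixed $\mu\in\mathbb C\setminus\mathbb R$, $M(\lambda)=E+M_0(\lambda)$, where $E=\operatorname{Re}M(\mu)=\frac12(M(\mu)+M(\mu)^* )\upharpoonright\operatorname{ran}\Gamma_0$ is a densely defined symmetric operator in $\mathcal H$ and $M_0(\lambda)$ is a bounded operator on $\operatorname{dom}E$ whose closure $\overline{M_0(\cdot)}$ belongs to $\mathcal R[\mathcal H]$.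
   Context: Linear relations are subspaces of product spaces, operators are identified with graphs; $\operatorname{mul}T=\{g:\{0,g\}\in T\}$, $T_1\hat+T_2=\{\{f+h,g+k\}:\{f,g\}\in T_1,\{h,k\}\in T_2\}$. $\mathfrak N_\lambda(T)=\ker(T-\lambda)$, $\widehat{\mathfrak N}_\lambda(T)=\{\{f,\lambda f\}:f\in\mathfrak N_\lambda(T)\}$. An AB-generalized boundary pair for $A^*$ is a linear relation $\Gamma:\mathfrak H^2\to\mathcal H^2$ with $\operatorname{dom}\Gamma\subset A^*$ dense in $A^*$ such that (1) Green's identity $(f',g)-(f,g')=(h',k)-(h,k')$ holds for all $\{\{f,f'\},\{h,h'\}\},\{\{g,g'\},\{k,k'\}\}\in\Gamma$; (2) $\operatorname{ran}\Gamma_0$ is dense in $\mathcal H$; (3) $A_0:=\ker\Gamma_0$ is selfadjoint; here $\Gamma_0=\{\{\hat f,h\}:\{\hat f,\{h,h'\}\}\in\Gamma\}$, $\Gamma_1=\{\{\hat f,h'\}:\{\hat f,\{h,h'\}\}\in\Gamma\}$. Weyl family $M(\lambda)=\{\hat h:\{\{f,\lambda f\},\hat h\}\in\Gamma\}$; $\gamma$-field $\gamma(\lambda)=\{\{h,f\}:\{\{f,\lambda f\},\{h,h'\}\}\in\Gamma\text{ for some }h'\}$. $H(\lambda):\operatorname{ran}(A_0-\lambda)\to A_0$, $H(\lambda)k=\{(A_0-\lambda)^{-1}k,\ k+\lambda(A_0-\lambda)^{-1}k\}$. $\mathcal R[\mathcal H]$: holomorphic $\mathcal B(\mathcal H)$-valued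 $F$ on $\mathbb C\setminus\mathbb R$ with $F(\bar\lambda)=F(\lambda)^*$, $\operatorname{Im}F(\lambda)\ge0$ on $\mathbb C_+$. *)

theory Defs
  imports "HOL-Analysis.Analysis"
begin

class chilbert = banach +
  fixes cscale :: "complex \<Rightarrow> 'a \<Rightarrow> 'a"
    and cinner :: "'a \<Rightarrow> 'a \<Rightarrow> complex"
  assumes cscale_add_right: "cscale a (x + y) = cscale a x + cscale a y"
    and cscale_add_left: "cscale (a + b) x = cscale a x + cscale b x"
    and cscale_cscale: "cscale a (cscale b x) = cscale (a * b) x"
    and cscale_one: "cscale 1 x = x"
    and cscale_of_real: "cscale (of_real r) x = scaleR r x"
    and cinner_add_left: "cinner (x + y) z = cinner x z + cinner y z"
    and cinner_cscale_left: "cinner (cscale a x) y = a * cinner x y"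
    and cinner_commute: "cinner y x = cnj (cinner x y)"
    and cinner_norm: "cinner x x = of_real ((norm x)\<^sup>2)"

instantiation prod :: (chilbert, chilbert) chilbert
begin
definition cscale_prod_def: "cscale a p = (cscale a (fst p), cscale a (snd p))"
definition cinner_prod_def: "cinner p q = cinner (fst p) (fst q) + cinner (snd p) (snd q)"
instance
proof
  fix a b :: complex and x y z :: "'a \<times> 'b" and r :: real
  show "cscale a (x + y) = cscale a x + cscale a y"
    by (simp add: cscale_prod_def cscale_add_right)
  show "cscale (a + b) x = cscale a x + cscale b x"
    by (simp add: cscale_prod_def cscale_add_left)
  show "cscale a (cscale b x) = cscale (a * b) x"
    by (simp add: cscale_prod_def cscale_cscale)
  show "cscale 1 x = x" by (simp add: cscale_prod_def cscale_one)
  show "cscale (of_real r) x = scaleR r x"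
    by (simp add: cscale_prod_def cscale_of_real scaleR_prod_def)
  show "cinner (x + y) z = cinner x z + cinner y z"
    by (simp add: cinner_prod_def cinner_add_left)
  show "cinner (cscale a x) y = a * cinner x y"
    by (simp add: cinner_prod_def cscale_prod_def cinner_cscale_left algebra_simps)
  show "cinner y x = cnj (cinner x y)"
    by (simp add: cinner_prod_def cinner_commute[of "fst y"] cinner_commute[of "snd y"])
  show "cinner x x = of_real ((norm x)\<^sup>2)"
    by (simp add: cinner_prod_def cinner_norm norm_prod_def)
qed
end

text \<open>Relations are sets of pairs; dom = Domain, ran = Range (HOL), composition
S T = T O S (HOL relcomp, apply T first).\<close>

definition csubspace :: "'a::chilbert set \<Rightarrow> bool" where
  "csubspace S \<longleftrightarrow> 0 \<in> S \<and> (\<forall>x\<in>S. \<forall>y\<in>S. x + y \<in> S) \<and> (\<forall>c. \<forall>x\<in>S. cscale c x \<in> S)"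

definition adj :: "('a::chilbert \<times> 'b::chilbert) set \<Rightarrow> ('b \<times> 'a) set" where
  "adj T = {(h, k). \<forall>(f, g) \<in> T. cinner g h = cinner f k}"

definition mulr :: "('a::zero \<times> 'b) set \<Rightarrow> 'b set" where
  "mulr T = {g. (0, g) \<in> T}"

definition kerr :: "('a \<times> 'b::zero) set \<Rightarrow> 'a set" where
  "kerr T = {f. (f, 0) \<in> T}"

definition is_operator :: "('a::zero \<times> 'b::zero) set \<Rightarrow> bool" where
  "is_operator T \<longleftrightarrow> mulr T = {0}"

definition bounded_rel :: "('a::real_normed_vector \<times> 'b::real_normed_vector) set \<Rightarrow> bool" where
  "bounded_rel T \<longleftrightarrow> (\<exists>C. \<forall>(f, g) \<in> T. norm g \<le> C * norm f)"

definition Nker :: "complex \<Rightarrow> ('a::chilbert \<times> 'a) set \<Rightarrow> 'a set" where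
  "Nker \<zeta> T = {f. (f, cscale \<zeta> f) \<in> T}"

definition Nhat :: "complex \<Rightarrow> ('a::chilbert \<times> 'a) set \<Rightarrow> ('a \<times> 'a) set" where
  "Nhat \<zeta> T = {(f, cscale \<zeta> f) | f. f \<in> Nker \<zeta> T}"

text \<open>componentwise sum \<open>T1 \<hat>+ T2\<close>\<close>
definition rsum :: "('a::plus \<times> 'b::plus) set \<Rightarrow> ('a \<times> 'b) set \<Rightarrow> ('a \<times> 'b) set" where
  "rsum T1 T2 = {(f + h, g + k) | f g h k. (f, g) \<in> T1 \<and> (h, k) \<in> T2}"

text \<open>operator-like sum \<open>T1 + T2\<close>\<close>
definition opsum :: "('a \<times> 'b::plus) set \<Rightarrow> ('a \<times> 'b) set \<Rightarrow> ('a \<times> 'b) set" where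
  "opsum T1 T2 = {(f, g + k) | f g k. (f, g) \<in> T1 \<and> (f, k) \<in> T2}"

definition smult_rel :: "complex \<Rightarrow> ('a \<times> 'b::chilbert) set \<Rightarrow> ('a \<times> 'b) set" where
  "smult_rel c T = {(f, cscale c g) | f g. (f, g) \<in> T}"

definition resolv :: "('a::chilbert \<times> 'a) set \<Rightarrow> complex \<Rightarrow> ('a \<times> 'a) set" where
  "resolv S \<zeta> = {(g - cscale \<zeta> f, f) | f g. (f, g) \<in> S}"

definition bp0 :: "(('a \<times> 'a) \<times> ('b \<times> 'b)) set \<Rightarrow> (('a \<times> 'a) \<times> 'b) set" where
  "bp0 \<Gamma> = {(fh, h) | fh h h'. (fh, (h, h')) \<in> \<Gamma>}"

definition bp1 :: "(('a \<times> 'a) \<times> ('b \<times> 'b)) set \<Rightarrow> (('a \<times> 'a) \<times> 'b) set" where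
  "bp1 \<Gamma> = {(fh, h') | fh h h'. (fh, (h, h')) \<in> \<Gamma>}"

definition bpA0 :: "(('a::zero \<times> 'a) \<times> ('b::zero \<times> 'b)) set \<Rightarrow> ('a \<times> 'a) set" where
  "bpA0 \<Gamma> = kerr (bp0 \<Gamma>)"

definition gammaf :: "(('a::chilbert \<times> 'a) \<times> ('b::chilbert \<times> 'b)) set \<Rightarrow> complex \<Rightarrow> ('b \<times> 'a) set" where
  "gammaf \<Gamma> \<zeta> = {(h, f) | f h h'. ((f, cscale \<zeta> f), (h, h')) \<in> \<Gamma>}"

definition weyl :: "(('a::chilbert \<times> 'a) \<times> ('b::chilbert \<times> 'b)) set \<Rightarrow> complex \<Rightarrow> ('b \<times> 'b) set" where
  "weyl \<Gamma> \<zeta> = {hh | f hh. ((f, cscale \<zeta> f), hh) \<in> \<Gamma>}"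

text \<open>\<open>H(\<zeta>) k = {(A0 - \<zeta>)\<^sup>-\<^sup>1 k, k + \<zeta>(A0 - \<zeta>)\<^sup>-\<^sup>1 k}\<close>, k in ran(A0 - \<zeta>)\<close>
definition Hrel :: "('a::chilbert \<times> 'a) set \<Rightarrow> complex \<Rightarrow> ('a \<times> ('a \<times> 'a)) set" where
  "Hrel A0 \<zeta> = {(k, (f, k + cscale \<zeta> f)) | k f. (k, f) \<in> resolv A0 \<zeta>}"

definition AB_boundary_pair ::
  "('a::chilbert \<times> 'a) set \<Rightarrow> (('a \<times> 'a) \<times> ('b::chilbert \<times> 'b)) set \<Rightarrow> bool" where
  "AB_boundary_pair A \<Gamma> \<longleftrightarrow>
     csubspace \<Gamma> \<and> Domain \<Gamma> \<subseteq> adj A \<and> adj A \<subseteq> closure (Domain \<Gamma>) \<and>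
     (\<forall>f f' h h' g g' k k'. ((f, f'), (h, h')) \<in> \<Gamma> \<longrightarrow> ((g, g'), (k, k')) \<in> \<Gamma> \<longrightarrow>
         cinner f' g - cinner f g' = cinner h' k - cinner h k') \<and>
     closure (Range (bp0 \<Gamma>)) = UNIV \<and>
     adj (bpA0 \<Gamma>) = bpA0 \<Gamma>"

definition closed_symmetric :: "('a::chilbert \<times> 'a) set \<Rightarrow> bool" where
  "closed_symmetric A \<longleftrightarrow> csubspace A \<and> closed A \<and> A \<subseteq> adj A"

definition ImM :: "'a set \<Rightarrow> ('a::chilbert \<times> 'a) set \<Rightarrow> ('a \<times> 'a) set" where
  "ImM D M = {(h, cscale (1 / (2 * \<i>)) (k - k')) | h k k'. h \<in> D \<and> (h, k) \<in> M \<and> (h, k') \<in> adj M}"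

definition ReM :: "'a set \<Rightarrow> ('a::chilbert \<times> 'a) set \<Rightarrow> ('a \<times> 'a) set" where
  "ReM D M = {(h, cscale (1 / 2) (k + k')) | h k k'. h \<in> D \<and> (h, k) \<in> M \<and> (h, k') \<in> adj M}"

definition bounded_clinear_map :: "('a::chilbert \<Rightarrow> 'b::chilbert) \<Rightarrow> bool" where
  "bounded_clinear_map G \<longleftrightarrow> (\<forall>x y. G (x + y) = G x + G y) \<and> (\<forall>c x. G (cscale c x) = cscale c (G x))
     \<and> (\<exists>K. \<forall>x. norm (G x) \<le> norm x * K)"

definition graph :: "('a \<Rightarrow> 'b) \<Rightarrow> ('a \<times> 'b) set" where
  "graph G = {(x, G x) | x. True}"

text \<open>\<open>F\<close> (relation valued, considered on \<open>\<complex>\<setminus>\<real>\<close>) belongs to \<open>\<R>[\<H>]\<close>: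
  F(z) is (the graph of) an everywhere defined bounded operator, F is holomorphic in
  operator norm, \<open>F(\<bar>z) = F(z)\<^sup>*\<close>, and \<open>Im F(z) \<ge> 0\<close> for Im z > 0.\<close>
definition nevanlinna :: "(complex \<Rightarrow> ('a::chilbert \<times> 'a) set) \<Rightarrow> bool" where
  "nevanlinna F \<longleftrightarrow> (\<exists>G. (\<forall>z. Im z \<noteq> 0 \<longrightarrow> F z = graph (G z) \<and> bounded_clinear_map (G z)) \<and>
     (\<forall>z. Im z \<noteq> 0 \<longrightarrow> (\<exists>D. bounded_clinear_map D \<and>
         ((\<lambda>w. onorm (\<lambda>x. cscale (inverse (w - z)) (G w x - G z x) - D x)) \<longlongrightarrow> 0) (at z))) \<and>
     (\<forall>z. Im z \<noteq> 0 \<longrightarrow> F (cnj z) = adj (F z)) \<and>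
     (\<forall>z. Im z > 0 \<longrightarrow> (\<forall>h. Im (cinner (G z h) h) \<ge> 0)))"

end

theory Submission
  imports Defs
begin

text \<open>Everything follows from Green's identity for \<open>\<Gamma>\<close> and the selfadjointness of
  \<open>A\<^sub>0 = ker \<Gamma>\<^sub>0\<close>. For nonreal \<open>\<zeta>\<close> the resolvent \<open>(A\<^sub>0 - \<zeta>)\<^sup>-\<^sup>1\<close> is bounded and everywhere
  defined, so every \<open>{f, f'} \<in> A\<^sub>*\<close> splits into an \<open>A\<^sub>0\<close>-part with first component
  \<open>(A\<^sub>0 - \<zeta>)\<^sup>-\<^sup>1 (f' - \<zeta> f)\<close> and a defect part; this gives the decomposition of \<open>A\<^sub>*\<close> and
  \<open>dom \<gamma>(\<zeta>) = dom M(\<zeta>) = ran \<Gamma>\<^sub>0\<close>. Green's identity against \<open>A\<^sub>0\<close> shows that \<open>\<gamma>(\<zeta>)\<^sup>*\<close> is everywhere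
  defined, so \<open>\<gamma>(\<zeta>)\<close> is weakly bounded and hence bounded by the uniform boundedness principle.
  Green's identity between defect elements gives
  \<open>\<langle>M(\<zeta>) h, k\<rangle> - \<langle>h, M(\<nu>) k\<rangle> = (\<zeta> - \<bar>\<nu>) \<langle>\<gamma>(\<zeta>) h, \<gamma>(\<nu>) k\<rangle>\<close>, from which the symmetry of
  \<open>M\<close>, the boundedness of \<open>Im M\<close> and, by density of \<open>ran \<Gamma>\<^sub>0\<close>, the Nevanlinna properties of
  \<open>M\<^sub>0(z) = M(z) - Re M(\<mu>)\<close> are read off.\<close>

section \<open>Complex inner product spaces\<close>

lemma cinner_add_right: "cinner x (y + z) = cinner x y + cinner x (z::'a::chilbert)"
  by (metis cinner_commute cinner_add_left complex_cnj_add)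

lemma cinner_cscale_right: "cinner x (cscale a y) = cnj a * cinner x (y::'a::chilbert)"
  by (metis cinner_commute cinner_cscale_left complex_cnj_mult complex_cnj_cnj)

lemma cinner_zero_left [simp]: "cinner 0 (y::'a::chilbert) = 0"
  using cinner_add_left[of 0 0 y] by simp

lemma cinner_zero_right [simp]: "cinner y (0::'a::chilbert) = 0"
  using cinner_commute[of y 0] by simp

lemma cinner_eq_zero_commute: "cinner x y = 0 \<longleftrightarrow> cinner y (x::'a::chilbert) = 0"
  by (metis cinner_commute complex_cnj_zero_iff)

lemma cscale_minus_one: "cscale (-1) (x::'a::chilbert) = - x"
  using cscale_of_real[of "-1" x] by simp

lemma cinner_minus_left: "cinner (- x) (y::'a::chilbert) = - cinner x y"
  using cinner_cscale_left[of "-1" x y] by (simp add: cscale_minus_one)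

lemma cinner_minus_right: "cinner y (- x::'a::chilbert) = - cinner y x"
  using cinner_commute[of y "-x"] cinner_commute[of y x] by (simp add: cinner_minus_left)

lemma cinner_diff_left: "cinner (x - y) (z::'a::chilbert) = cinner x z - cinner y z"
  using cinner_add_left[of x "-y" z] cinner_minus_left[of y z] by simp

lemma cinner_diff_right: "cinner z (x - y::'a::chilbert) = cinner z x - cinner z y"
  using cinner_add_right[of z x "-y"] cinner_minus_right[of z y] by simp

lemma cinner_scaleR_left: "cinner (scaleR r x) (y::'a::chilbert) = of_real r * cinner x y"
  using cinner_cscale_left[of "of_real r" x y] by (simp add: cscale_of_real)

lemma cinner_scaleR_right: "cinner y (scaleR r x::'a::chilbert) = of_real r * cinner y x"
  using cinner_cscale_right[of y "of_real r" x] by (simp add: cscale_of_real)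

lemma cinner_eq_zero_iff: "cinner x x = 0 \<longleftrightarrow> (x::'a::chilbert) = 0"
  by (simp add: cinner_norm)

lemma Im_cinner_eq_zero_if_symmetric: "cinner x y = cinner y (x::'a::chilbert) \<Longrightarrow> Im (cinner x y) = 0"
  by (metis cinner_commute cnj.simps(2) equal_neg_zero)

lemma cscale_zero_right [simp]: "cscale c (0::'a::chilbert) = 0"
  using cscale_add_right[of c 0 0] by simp

lemma cscale_minus_right: "cscale c (- x::'a::chilbert) = - cscale c x"
  using cscale_cscale[of c "-1" x] cscale_cscale[of "-1" c x] by (simp add: cscale_minus_one)

lemma cscale_diff_right: "cscale c (x - y::'a::chilbert) = cscale c x - cscale c y"
  using cscale_add_right[of c x "-y"] cscale_minus_right[of c y] by simp

lemma cscale_scaleR_commute: "cscale c (scaleR r x) = scaleR r (cscale c (x::'a::chilbert))"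
  by (simp add: cscale_of_real[symmetric] cscale_cscale mult.commute)

lemma norm_cscale: "norm (cscale c x) = cmod c * norm (x::'a::chilbert)"
proof -
  have "of_real ((norm (cscale c x))\<^sup>2) = cinner (cscale c x) (cscale c x)"
    by (simp only: cinner_norm)
  also have "\<dots> = c * cnj c * cinner x x"
    by (simp add: cinner_cscale_left cinner_cscale_right)
  also have "\<dots> = of_real ((cmod c * norm x)\<^sup>2)"
    by (simp only: cinner_norm complex_norm_square power_mult_distrib of_real_mult)
  finally have "(norm (cscale c x))\<^sup>2 = (cmod c * norm x)\<^sup>2"
    using of_real_eq_iff by blast
  then show ?thesis
    by (simp add: power2_eq_iff_nonneg)
qed

text \<open>Expanding \<open>\<parallel>u - t s\<parallel>\<^sup>2\<close> for the optimal coefficient \<open>t\<close> gives both the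
  Cauchy--Schwarz inequality and the orthogonality of nearest points.\<close>
lemma norm_diff_projection_sq:
  fixes u s :: "'a::chilbert"
  assumes "s \<noteq> 0"
  defines "t \<equiv> cinner u s / of_real ((norm s)\<^sup>2)"
  shows "(norm (u - cscale t s))\<^sup>2 = (norm u)\<^sup>2 - (cmod (cinner u s))\<^sup>2 / (norm s)\<^sup>2"
proof -
  have ns: "norm s > 0" using assms by simp
  have "of_real ((norm (u - cscale t s))\<^sup>2) = cinner (u - cscale t s) (u - cscale t s)"
    by (simp only: cinner_norm)
  also have "\<dots> = cinner u u - cnj t * cinner u s - t * cinner s u + t * cnj t * cinner s s"
    by (simp add: cinner_diff_left cinner_diff_right cinner_cscale_left cinner_cscale_right
        algebra_simps)
  also have "\<dots> = of_real ((norm u)\<^sup>2) - cinner u s * cnj (cinner u s) / of_real ((norm s)\<^sup>2)"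
    using ns by (simp add: t_def cinner_norm cinner_commute[of s u] field_simps power2_eq_square)
  also have "\<dots> = of_real ((norm u)\<^sup>2 - (cmod (cinner u s))\<^sup>2 / (norm s)\<^sup>2)"
    by (simp only: complex_norm_square of_real_diff of_real_divide)
  finally show ?thesis
    using of_real_eq_iff by blast
qed

lemma norm_cinner_le: "cmod (cinner x y) \<le> norm x * norm (y::'a::chilbert)"
proof (cases "y = 0")
  case False
  then have "(cmod (cinner x y))\<^sup>2 / (norm y)\<^sup>2 \<le> (norm x)\<^sup>2"
    using norm_diff_projection_sq[OF False, of x] by (metis diff_ge_0_iff_ge zero_le_power2)
  then have "(cmod (cinner x y))\<^sup>2 \<le> (norm x * norm y)\<^sup>2"
    using False by (simp add: pos_divide_le_eq power_mult_distrib)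
  then show ?thesis
    by (simp add: power2_le_iff_abs_le)
qed simp

lemma parallelogram_law:
  fixes a b :: "'a::chilbert"
  shows "(norm (a + b))\<^sup>2 + (norm (a - b))\<^sup>2 = 2 * (norm a)\<^sup>2 + 2 * (norm b)\<^sup>2"
proof -
  have "of_real ((norm (a + b))\<^sup>2 + (norm (a - b))\<^sup>2)
      = cinner (a + b) (a + b) + cinner (a - b) (a - b)"
    by (simp only: cinner_norm of_real_add)
  also have "\<dots> = 2 * cinner a a + 2 * cinner b b"
    by (simp add: cinner_diff_left cinner_diff_right cinner_add_left cinner_add_right
        algebra_simps)
  also have "\<dots> = of_real (2 * (norm a)\<^sup>2 + 2 * (norm b)\<^sup>2)"
    by (simp only: cinner_norm of_real_add of_real_mult of_real_numeral)
  finally show ?thesis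
    using of_real_eq_iff by blast
qed

lemma bounded_bilinear_cinner: "bounded_bilinear (cinner :: 'a::chilbert \<Rightarrow> 'a \<Rightarrow> complex)"
proof
  fix a a' b b' :: 'a and r :: real
  show "cinner (a + a') b = cinner a b + cinner a' b" by (rule cinner_add_left)
  show "cinner a (b + b') = cinner a b + cinner a b'" by (rule cinner_add_right)
  show "cinner (scaleR r a) b = scaleR r (cinner a b)"
    by (simp add: cinner_scaleR_left scaleR_conv_of_real)
  show "cinner a (scaleR r b) = scaleR r (cinner a b)"
    by (simp add: cinner_scaleR_right scaleR_conv_of_real)
  show "\<exists>K. \<forall>a b. norm (cinner a (b::'a)) \<le> norm a * norm b * K"
    by (rule exI[of _ 1]) (simp add: norm_cinner_le)
qed

lemma bounded_bilinear_cscale: "bounded_bilinear (cscale :: complex \<Rightarrow> 'a::chilbert \<Rightarrow> 'a)"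
proof
  fix a a' :: complex and b b' :: 'a and r :: real
  show "cscale (a + a') b = cscale a b + cscale a' b" by (rule cscale_add_left)
  show "cscale a (b + b') = cscale a b + cscale a b'" by (rule cscale_add_right)
  show "cscale (scaleR r a) b = scaleR r (cscale a b)"
    by (metis cscale_cscale cscale_of_real scaleR_conv_of_real)
  show "cscale a (scaleR r b) = scaleR r (cscale a b)" by (rule cscale_scaleR_commute)
  show "\<exists>K. \<forall>a b. norm (cscale a (b::'a)) \<le> norm a * norm b * K"
    by (rule exI[of _ 1]) (simp add: norm_cscale)
qed

lemmas continuous_on_cinner [continuous_intros] =
  bounded_bilinear.continuous_on[OF bounded_bilinear_cinner]
lemmas tendsto_cscale [tendsto_intros] = bounded_bilinear.tendsto[OF bounded_bilinear_cscale]
lemmas continuous_on_cscale [continuous_intros] =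
  bounded_bilinear.continuous_on[OF bounded_bilinear_cscale]

section \<open>Density arguments\<close>

lemma dense_closed_Collect:
  "closure S = UNIV \<Longrightarrow> closed {x. P x} \<Longrightarrow> (\<And>x. x \<in> S \<Longrightarrow> P x) \<Longrightarrow> P y"
  using closure_minimal[of S "{x. P x}"] by auto

lemma dense_continuous_le:
  fixes f g :: "'a::topological_space \<Rightarrow> real"
  assumes "closure S = UNIV" "continuous_on UNIV f" "continuous_on UNIV g"
    and "\<And>x. x \<in> S \<Longrightarrow> f x \<le> g x"
  shows "f y \<le> g y"
  using dense_closed_Collect[OF assms(1) closed_Collect_le[OF assms(2,3)]] assms(4) by blast

lemma dense_continuous_eq:
  fixes f g :: "'a::topological_space \<Rightarrow> 'b::t2_space"
  assumes "closure S = UNIV" "continuous_on UNIV f" "continuous_on UNIV g"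
    and "\<And>x. x \<in> S \<Longrightarrow> f x = g x"
  shows "f y = g y"
  using dense_closed_Collect[OF assms(1) closed_Collect_eq[OF assms(2,3)]] assms(4) by blast

lemma dense_orthogonal_eq_0:
  fixes x :: "'a::chilbert"
  assumes "closure S = UNIV" "\<And>y. y \<in> S \<Longrightarrow> cinner y x = 0"
  shows "x = 0"
proof -
  have "cinner x x = 0"
    by (rule dense_continuous_eq[OF assms(1), where f="\<lambda>y. cinner y x" and g="\<lambda>y. 0"])
       (auto intro!: continuous_intros assms(2))
  then show ?thesis
    by (simp add: cinner_eq_zero_iff)
qed

lemma norm_le_if_cinner_le:
  fixes v :: "'a::chilbert"
  assumes "\<And>k. cmod (cinner v k) \<le> c * norm k" "0 \<le> c"
  shows "norm v \<le> c"
proof (cases "v = 0")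
  case False
  have "cmod (cinner v v) = (norm v)\<^sup>2"
    by (simp only: cinner_norm norm_of_real) simp
  then have "(norm v)\<^sup>2 \<le> c * norm v"
    using assms(1)[of v] by simp
  then show ?thesis
    using False by (simp add: power2_eq_square)
qed (use assms in simp)

lemma norm_le_if_cinner_le_on_dense:
  fixes v :: "'a::chilbert"
  assumes "closure S = UNIV" "\<And>k. k \<in> S \<Longrightarrow> cmod (cinner v k) \<le> c * norm k" "0 \<le> c"
  shows "norm v \<le> c"
proof (rule norm_le_if_cinner_le[OF _ assms(3)])
  fix k
  show "cmod (cinner v k) \<le> c * norm k"
    by (rule dense_continuous_le[OF assms(1), where f="\<lambda>k. cmod (cinner v k)" and g="\<lambda>k. c * norm k"])
       (auto intro!: continuous_intros assms(2))
qed

lemma Cauchy_if_dist_le: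
  fixes X :: "nat \<Rightarrow> 'a::metric_space" and Y :: "nat \<Rightarrow> 'b::metric_space"
  assumes "Cauchy X" "\<And>m n. dist (Y m) (Y n) \<le> c * dist (X m) (X n)"
  shows "Cauchy Y"
proof (rule metric_CauchyI)
  fix e :: real
  assume e: "0 < e"
  then obtain M where M: "\<forall>m\<ge>M. \<forall>n\<ge>M. dist (X m) (X n) < e / (\<bar>c\<bar> + 1)"
    using assms(1) by (meson metric_CauchyD divide_pos_pos abs_ge_zero add_nonneg_pos zero_less_one)
  show "\<exists>M. \<forall>m\<ge>M. \<forall>n\<ge>M. dist (Y m) (Y n) < e"
  proof (intro exI allI impI)
    fix m n
    assume "M \<le> m" "M \<le> n"
    have "dist (Y m) (Y n) \<le> \<bar>c\<bar> * dist (X m) (X n)"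
      using assms(2)[of m n] by (smt (verit) mult_right_mono zero_le_dist)
    also have "\<dots> \<le> \<bar>c\<bar> * (e / (\<bar>c\<bar> + 1))"
      using M \<open>M \<le> m\<close> \<open>M \<le> n\<close> by (intro mult_left_mono) (auto intro: less_imp_le)
    also have "\<dots> < e"
      using e by (simp add: field_simps)
    finally show "dist (Y m) (Y n) < e" .
  qed
qed

section \<open>Complex subspaces and orthogonal projection\<close>

lemma csubspace_0: "csubspace S \<Longrightarrow> 0 \<in> S"
  by (simp add: csubspace_def)

lemma csubspace_add: "csubspace S \<Longrightarrow> x \<in> S \<Longrightarrow> y \<in> S \<Longrightarrow> x + y \<in> S"
  by (simp add: csubspace_def)

lemma csubspace_cscale: "csubspace S \<Longrightarrow> x \<in> S \<Longrightarrow> cscale c x \<in> S"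
  by (simp add: csubspace_def)

lemma csubspace_scaleR: "csubspace S \<Longrightarrow> x \<in> S \<Longrightarrow> scaleR r x \<in> S"
  by (metis csubspace_cscale cscale_of_real)

lemma csubspace_diff: "csubspace S \<Longrightarrow> x \<in> S \<Longrightarrow> y \<in> S \<Longrightarrow> x - y \<in> S"
  by (metis csubspace_add csubspace_cscale cscale_minus_one diff_conv_add_uminus)

lemma csubspace_closure:
  fixes S :: "'a::chilbert set"
  assumes S: "csubspace S"
  shows "csubspace (closure S)"
  unfolding csubspace_def
proof (intro conjI ballI allI)
  show "0 \<in> closure S"
    using csubspace_0[OF S] closure_subset by blast
next
  fix x y
  assume "x \<in> closure S" "y \<in> closure S"
  then obtain X Y where X: "\<forall>n. X n \<in> S" "X \<longlonglongrightarrow> x" and Y: "\<forall>n. Y n \<in> S" "Y \<longlonglongrightarrow> y"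
    by (meson closure_sequential)
  then have "\<forall>n. X n + Y n \<in> S" "(\<lambda>n. X n + Y n) \<longlonglongrightarrow> x + y"
    using S by (auto simp: csubspace_add intro!: tendsto_intros)
  then show "x + y \<in> closure S"
    by (meson closure_sequential)
next
  fix c x
  assume "x \<in> closure S"
  then obtain X where X: "\<forall>n. X n \<in> S" "X \<longlonglongrightarrow> x"
    by (meson closure_sequential)
  then have "\<forall>n. cscale c (X n) \<in> S" "(\<lambda>n. cscale c (X n)) \<longlonglongrightarrow> cscale c x"
    using S by (auto simp: csubspace_cscale intro!: tendsto_intros)
  then show "cscale c x \<in> closure S"
    by (meson closure_sequential)
qed

text \<open>The midpoint of two almost nearest points of a subspace lies in the subspace, so by the
  parallelogram law the two points are close to each other.\<close>
lemma almost_nearest_points_close: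
  fixes x :: "'a::chilbert"
  assumes S: "csubspace S" and "s \<in> S" "t \<in> S" and d: "0 \<le> d" "\<And>q. q \<in> S \<Longrightarrow> d \<le> dist x q"
    and "dist x s \<le> d + e" "dist x t \<le> d + e"
  shows "(dist s t)\<^sup>2 \<le> 4 * e * (2 * d + e)"
proof -
  define a where "a = x - s"
  define b where "b = x - t"
  have "a + b = scaleR 2 (x - scaleR (1/2) (s + t))"
    by (simp add: a_def b_def algebra_simps scaleR_2)
  moreover have "d \<le> dist x (scaleR (1/2) (s + t))"
    using assms by (intro d(2) csubspace_scaleR csubspace_add)
  ultimately have "4 * d\<^sup>2 \<le> (norm (a + b))\<^sup>2"
    using d(1) by (simp add: dist_norm power_mult_distrib power_mono)
  moreover have "(norm a)\<^sup>2 \<le> (d + e)\<^sup>2" "(norm b)\<^sup>2 \<le> (d + e)\<^sup>2"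
    using assms d(1) by (auto simp: a_def b_def dist_norm intro!: power_mono)
  moreover have "(norm (a - b))\<^sup>2 = 2 * (norm a)\<^sup>2 + 2 * (norm b)\<^sup>2 - (norm (a + b))\<^sup>2"
    using parallelogram_law[of a b] by simp
  moreover have "a - b = t - s"
    by (simp add: a_def b_def)
  ultimately have "(norm (t - s))\<^sup>2 \<le> 4 * (d + e)\<^sup>2 - 4 * d\<^sup>2"
    by simp
  also have "\<dots> = 4 * e * (2 * d + e)"
    by (simp add: power2_eq_square algebra_simps)
  finally show ?thesis
    by (simp add: dist_norm norm_minus_commute)
qed

lemma minimizing_sequence_Cauchy:
  fixes x :: "'a::chilbert"
  assumes S: "csubspace S" and sS: "\<And>n. s n \<in> S" and d0: "0 \<le> d"
    and dle: "\<And>q. q \<in> S \<Longrightarrow> d \<le> dist x q" and sd: "\<And>n. dist x (s n) < d + 1 / real (Suc n)"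
  shows "Cauchy s"
proof (rule metric_CauchyI)
  have close: "(dist (s m) (s n))\<^sup>2 \<le> 4 * (2 * d + 1) / real (Suc N)" if "N \<le> m" "N \<le> n" for m n N
  proof -
    have "1 / real (Suc m) \<le> 1 / real (Suc N)" "1 / real (Suc n) \<le> 1 / real (Suc N)"
      using that by (simp_all add: frac_le)
    then have "(dist (s m) (s n))\<^sup>2 \<le> 4 * (1 / real (Suc N)) * (2 * d + 1 / real (Suc N))"
      using sd[of m] sd[of n] by (intro almost_nearest_points_close[OF S sS sS d0 dle]) auto
    also have "\<dots> \<le> 4 * (1 / real (Suc N)) * (2 * d + 1)"
      by (intro mult_left_mono) auto
    finally show ?thesis
      by simp
  qed
  fix e :: real
  assume e: "0 < e"
  obtain N :: nat where N: "4 * (2 * d + 1) / e\<^sup>2 < real N"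
    using reals_Archimedean2 by blast
  then have "4 * (2 * d + 1) / real (Suc N) < e\<^sup>2"
    using e d0 by (simp add: field_simps) (smt (verit) zero_less_power)
  then have "\<forall>m\<ge>N. \<forall>n\<ge>N. dist (s m) (s n) < e"
    using close e by (smt (verit) power_less_imp_less_base zero_le_dist)
  then show "\<exists>M. \<forall>m\<ge>M. \<forall>n\<ge>M. dist (s m) (s n) < e" ..
qed

lemma closed_csubspace_nearest_point:
  fixes x :: "'a::chilbert"
  assumes S: "csubspace S" "closed S"
  obtains p where "p \<in> S" "\<And>q. q \<in> S \<Longrightarrow> dist x p \<le> dist x q"
proof -
  define d where "d = infdist x S"
  have d0: "0 \<le> d" and dle: "\<And>q. q \<in> S \<Longrightarrow> d \<le> dist x q"
    by (simp_all add: d_def infdist_nonneg infdist_le)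
  have "\<exists>s\<in>S. dist x s < d + 1 / real (Suc n)" for n
  proof -
    have "S \<noteq> {}"
      using csubspace_0[OF S(1)] by blast
    moreover have "(INF q\<in>S. dist x q) < d + 1 / real (Suc n)"
      using calculation by (simp add: d_def infdist_notempty)
    ultimately show ?thesis
      by (subst (asm) cINF_less_iff) auto
  qed
  then obtain s where sS: "\<And>n. s n \<in> S" and sd: "\<And>n. dist x (s n) < d + 1 / real (Suc n)"
    by metis
  obtain p where lim: "s \<longlonglongrightarrow> p"
    using minimizing_sequence_Cauchy[OF S(1) sS d0 dle sd] Cauchy_convergent_iff convergent_def
    by blast
  have "p \<in> S"
    using closed_sequentially[OF S(2) _ lim] sS by blast
  moreover have "dist x p \<le> d"
  proof -
    have "(\<lambda>n. dist x (s n)) \<longlonglongrightarrow> dist x p"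
      using lim by (intro tendsto_intros)
    moreover have "(\<lambda>n. d + 1 / real (Suc n)) \<longlonglongrightarrow> d + 0"
      by (intro tendsto_intros LIMSEQ_Suc lim_const_over_n)
    ultimately show ?thesis
      using sd by (intro LIMSEQ_le[where X="\<lambda>n. dist x (s n)"]) (auto intro: less_imp_le)
  qed
  ultimately show ?thesis
    using dle that by (meson order_trans)
qed

lemma nearest_point_orthogonal:
  fixes x :: "'a::chilbert"
  assumes S: "csubspace S" and "p \<in> S" and nearest: "\<And>q. q \<in> S \<Longrightarrow> dist x p \<le> dist x q"
    and "q \<in> S"
  shows "cinner (x - p) q = 0"
proof (rule ccontr)
  assume ne0: "cinner (x - p) q \<noteq> 0"
  then have q0: "q \<noteq> 0"
    by auto
  define t where "t = cinner (x - p) q / of_real ((norm q)\<^sup>2)"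
  have "p + cscale t q \<in> S"
    using assms by (intro csubspace_add csubspace_cscale)
  then have "(norm (x - p))\<^sup>2 \<le> (norm ((x - p) - cscale t q))\<^sup>2"
    using nearest by (force simp: dist_norm algebra_simps intro: power_mono)
  also have "\<dots> = (norm (x - p))\<^sup>2 - (cmod (cinner (x - p) q))\<^sup>2 / (norm q)\<^sup>2"
    using norm_diff_projection_sq[OF q0, of "x - p"] by (simp add: t_def)
  moreover have "(cmod (cinner (x - p) q))\<^sup>2 / (norm q)\<^sup>2 > 0"
    using ne0 q0 by simp
  ultimately show False
    by simp
qed

lemma closed_csubspace_projection:
  fixes x :: "'a::chilbert"
  assumes "csubspace S" "closed S"
  obtains p where "p \<in> S" "\<And>q. q \<in> S \<Longrightarrow> cinner (x - p) q = 0"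
  using closed_csubspace_nearest_point[OF assms] nearest_point_orthogonal[OF assms(1)] by metis

lemma closed_csubspace_eq_UNIV:
  fixes S :: "'a::chilbert set"
  assumes "csubspace S" "closed S" "\<And>y. (\<forall>s\<in>S. cinner s y = 0) \<Longrightarrow> y = 0"
  shows "S = UNIV"
proof -
  have "x \<in> S" for x
  proof -
    obtain p where "p \<in> S" "\<And>q. q \<in> S \<Longrightarrow> cinner (x - p) q = 0"
      using closed_csubspace_projection[OF assms(1,2)] by blast
    then have "x - p = 0"
      using assms(3) cinner_eq_zero_commute by blast
    then show ?thesis
      using \<open>p \<in> S\<close> by simp
  qed
  then show ?thesis
    by blast
qed

section \<open>Adjoints of linear relations\<close>

lemma adjD: "(h, k) \<in> adj T \<Longrightarrow> (f, g) \<in> T \<Longrightarrow> cinner g h = cinner f k"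
  by (auto simp: adj_def)

lemma adjI: "(\<And>f g. (f, g) \<in> T \<Longrightarrow> cinner g h = cinner f k) \<Longrightarrow> (h, k) \<in> adj T"
  by (auto simp: adj_def)

lemma adj_antimono: "S \<subseteq> T \<Longrightarrow> adj T \<subseteq> adj S"
  by (auto simp: adj_def)

lemma subset_adj_iff: "S \<subseteq> adj T \<longleftrightarrow> T \<subseteq> adj S"
proof -
  have "S \<subseteq> adj T \<longleftrightarrow> (\<forall>h k f g. (h, k) \<in> S \<longrightarrow> (f, g) \<in> T \<longrightarrow> cinner g h = cinner f k)"
    by (auto simp: adj_def)
  also have "\<dots> \<longleftrightarrow> (\<forall>h k f g. (h, k) \<in> S \<longrightarrow> (f, g) \<in> T \<longrightarrow> cinner k f = cinner h g)"
    by (metis cinner_commute)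
  also have "\<dots> \<longleftrightarrow> T \<subseteq> adj S"
    by (auto simp: adj_def)
  finally show ?thesis .
qed

lemma closed_adj: "closed (adj T)"
proof -
  have "adj T = (\<Inter>p\<in>T. {q. cinner (snd p) (fst q) = cinner (fst p) (snd q)})"
    by (auto simp: adj_def) (metis fst_conv snd_conv)+
  then show ?thesis
    by (auto intro!: closed_INT closed_Collect_eq continuous_intros)
qed

lemma csubspace_adj: "csubspace (adj T)"
  unfolding csubspace_def
proof (intro conjI ballI allI)
  show "0 \<in> adj T"
    by (auto simp: adj_def zero_prod_def)
next
  fix x y
  assume "x \<in> adj T" "y \<in> adj T"
  moreover obtain a b a' b' where "x = (a, b)" "y = (a', b')"
    by fastforce
  ultimately show "x + y \<in> adj T"
    by (auto intro!: adjI simp: adjD cinner_add_right)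
next
  fix c x
  assume "x \<in> adj T"
  then show "cscale c x \<in> adj T"
    by (cases x) (auto intro!: adjI dest: adjD simp: cscale_prod_def cinner_cscale_right)
qed

lemma adj_closure: "adj (closure T) = adj T"
proof
  show "adj (closure T) \<subseteq> adj T"
    by (rule adj_antimono) (rule closure_subset)
  show "adj T \<subseteq> adj (closure T)"
  proof
    fix p
    assume p: "p \<in> adj T"
    obtain h k where hk: "p = (h, k)"
      by fastforce
    have "closure T \<subseteq> {q. cinner (snd q) h = cinner (fst q) k}"
      by (rule closure_minimal)
         (use p hk in \<open>auto simp: adj_def intro!: closed_Collect_eq continuous_intros\<close>)
    then show "p \<in> adj (closure T)"
      using hk by (auto simp: adj_def)
  qed
qed

text \<open>An element orthogonal to a closed relation \<open>A\<close> in the product space, written as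
  \<open>(q\<^sub>1, q\<^sub>2)\<close>, gives \<open>(q\<^sub>2, -q\<^sub>1) \<in> A\<^sup>*\<close>; hence \<open>A\<^sup>*\<^sup>* \<subseteq> A\<close>.\<close>
lemma adj_adj_subset:
  fixes A :: "('a::chilbert \<times> 'a) set"
  assumes "csubspace A" "closed A"
  shows "adj (adj A) \<subseteq> A"
proof
  fix x
  assume x: "x \<in> adj (adj A)"
  obtain p where pA: "p \<in> A" and orth: "\<And>s. s \<in> A \<Longrightarrow> cinner (x - p) s = 0"
    using closed_csubspace_projection[OF assms] by blast
  obtain q1 q2 where q: "x - p = (q1, q2)"
    by fastforce
  obtain f f' where xf: "x = (f, f')"
    by fastforce
  have "(q2, - q1) \<in> adj A"
  proof (rule adjI)
    fix a a'
    assume "(a, a') \<in> A"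
    then have "cinner q1 a + cinner q2 a' = 0"
      using orth[of "(a, a')"] by (simp add: q cinner_prod_def)
    then have "cinner a q1 + cinner a' q2 = 0"
      by (metis cinner_commute complex_cnj_add complex_cnj_zero)
    then show "cinner a' q2 = cinner a (- q1)"
      by (simp add: cinner_minus_right eq_neg_iff_add_eq_0 add.commute)
  qed
  then have "cinner (- q1) f = cinner q2 f'"
    using adjD[OF x[unfolded xf]] by blast
  then have "cinner q1 f + cinner q2 f' = 0"
    by (simp add: cinner_minus_left) (metis add.commute neg_eq_iff_add_eq_0)
  then have "cinner (x - p) x = 0"
    unfolding q by (simp add: xf cinner_prod_def)
  moreover have "cinner (x - p) p = 0"
    using orth[OF pA] .
  ultimately have "cinner (x - p) (x - p) = 0"
    by (simp add: cinner_diff_right)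
  then show "x \<in> A"
    using pA by (simp add: cinner_eq_zero_iff)
qed

lemma adj_single_valued:
  fixes T :: "('a::chilbert \<times> 'b::chilbert) set"
  assumes "closure (Domain T) = UNIV" "(h, k1) \<in> adj T" "(h, k2) \<in> adj T"
  shows "k1 = k2"
proof -
  have "k1 - k2 = 0"
  proof (rule dense_orthogonal_eq_0[OF assms(1)])
    fix f
    assume "f \<in> Domain T"
    then obtain g where "(f, g) \<in> T"
      by blast
    then show "cinner f (k1 - k2) = 0"
      using adjD[OF assms(2)] adjD[OF assms(3)] by (simp add: cinner_diff_right)
  qed
  then show ?thesis
    by simp
qed

lemma is_operator_adj:
  fixes T :: "('a::chilbert \<times> 'b::chilbert) set"
  assumes "closure (Domain T) = UNIV"
  shows "is_operator (adj T)"
proof -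
  have "(0, 0) \<in> adj T"
    by (auto simp: adj_def)
  then show ?thesis
    using adj_single_valued[OF assms _ \<open>(0, 0) \<in> adj T\<close>]
    by (auto simp: is_operator_def mulr_def)
qed

section \<open>Uniform boundedness\<close>

lemma Baire_ball:
  fixes F :: "nat \<Rightarrow> 'a::banach set"
  assumes "\<And>n. closed (F n)" "\<Union>(range F) = UNIV"
  obtains n x r where "r > 0" "ball x r \<subseteq> F n"
proof -
  have "\<exists>n. interior (F n) \<noteq> {}"
  proof (rule ccontr)
    assume "\<not> ?thesis"
    then have "Met_TC.mtopology interior_of \<Union>(range F) = {}"
      by (intro Met_TC.metric_Baire_category_alt) (auto simp: complete_UNIV assms(1))
    then show False
      using assms(2) by simp
  qed
  then show ?thesis
    using that by (metis equals0I mem_interior)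
qed

lemma norm_le_if_cinner_bounded_on_ball:
  fixes x :: "'a::chilbert"
  assumes r: "r > 0" and bound: "\<And>k. k \<in> ball k0 r \<Longrightarrow> cmod (cinner x k) \<le> C"
  shows "r * norm x \<le> 4 * C"
proof (cases "x = 0")
  case True
  then show ?thesis
    using bound[of k0] r by simp
next
  case False
  define k where "k = scaleR (r / (2 * norm x)) x"
  have "norm k = r / 2"
    using False r by (simp add: k_def)
  then have "cmod (cinner x (k0 + k)) \<le> C" "cmod (cinner x k0) \<le> C"
    using r by (auto intro!: bound simp: dist_norm)
  moreover have "cmod (cinner x k) \<le> cmod (cinner x (k0 + k)) + cmod (cinner x k0)"
    by (metis cinner_add_right add_diff_cancel_left' norm_diff_ineq norm_triangle_ineq4 order_trans)
  moreover have "cinner x k = of_real (r / 2 * norm x)"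
    using False by (simp add: k_def cinner_scaleR_right cinner_norm power2_eq_square)
  then have "cmod (cinner x k) = r / 2 * norm x"
    using r by (simp only: norm_of_real) simp
  ultimately show ?thesis
    by linarith
qed

text \<open>Baire's theorem gives a ball on which the weak bounds are uniform.\<close>
lemma weakly_bounded_imp_bounded:
  fixes S :: "('b::real_normed_vector \<times> 'a::chilbert) set"
  assumes "\<And>k. \<exists>c. \<forall>h x. (h, x) \<in> S \<longrightarrow> cmod (cinner x k) \<le> c * norm h"
  shows "bounded_rel S"
proof -
  define F where "F n = {k. \<forall>h x. (h, x) \<in> S \<longrightarrow> cmod (cinner x k) \<le> real n * norm h}" for n
  have closed: "closed (F n)" for n
  proof -
    have "F n = (\<Inter>p\<in>S. {k. cmod (cinner (snd p) k) \<le> real n * norm (fst p)})"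
      by (auto simp: F_def) (metis fst_conv snd_conv)+
    then show ?thesis
      by (auto intro!: closed_INT closed_Collect_le continuous_intros)
  qed
  have "k \<in> \<Union>(range F)" for k
  proof -
    obtain c where c: "\<forall>h x. (h, x) \<in> S \<longrightarrow> cmod (cinner x k) \<le> c * norm h"
      using assms by blast
    obtain n where "c \<le> real n"
      using real_arch_simple by blast
    then have "c * norm h \<le> real n * norm h" for h :: 'b
      by (simp add: mult_right_mono)
    then have "k \<in> F n"
      using c by (force simp: F_def intro: order_trans)
    then show ?thesis
      by blast
  qed
  then have "\<Union>(range F) = UNIV"
    by blast
  then obtain n k0 r where r: "r > 0" and ball: "ball k0 r \<subseteq> F n"
    by (rule Baire_ball[OF closed])
  have "norm x \<le> (4 * real n / r) * norm h" if "(h, x) \<in> S" for h x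
  proof -
    have "r * norm x \<le> 4 * (real n * norm h)"
      using ball that by (intro norm_le_if_cinner_bounded_on_ball[OF r]) (auto simp: F_def)
    then show ?thesis
      using r by (simp add: field_simps)
  qed
  then show ?thesis
    unfolding bounded_rel_def by blast
qed

section \<open>Closures of bounded densely defined operators\<close>

lemma bounded_clinear_map_imp_bounded_linear:
  assumes "bounded_clinear_map G"
  shows "bounded_linear G"
proof
  show "G (x + y) = G x + G y" for x y
    using assms by (simp add: bounded_clinear_map_def)
  show "G (scaleR r x) = scaleR r (G x)" for r x
    using assms by (metis bounded_clinear_map_def cscale_of_real)
  show "\<exists>K. \<forall>x. norm (G x) \<le> norm x * K"
    using assms by (simp add: bounded_clinear_map_def)
qed

lemma bounded_clinear_map_zero: "bounded_clinear_map F \<Longrightarrow> F 0 = 0"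
  using linear_0[OF bounded_linear.linear[OF bounded_clinear_map_imp_bounded_linear]] .

lemma bounded_clinear_map_compose:
  assumes "bounded_clinear_map F" "bounded_clinear_map H"
  shows "bounded_clinear_map (\<lambda>x. F (H x))"
  unfolding bounded_clinear_map_def
proof (intro conjI allI)
  show "F (H (x + y)) = F (H x) + F (H y)" "F (H (cscale c x)) = cscale c (F (H x))" for c x y
    using assms by (simp_all add: bounded_clinear_map_def)
  have "bounded_linear (\<lambda>x. F (H x))"
    using assms by (intro bounded_linear_compose[OF bounded_clinear_map_imp_bounded_linear
          bounded_clinear_map_imp_bounded_linear])
  then show "\<exists>K. \<forall>x. norm (F (H x)) \<le> norm x * K"
    by (rule bounded_linear.bounded)
qed

lemma in_graph_iff: "(x, y) \<in> graph F \<longleftrightarrow> y = F x"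
  by (auto simp: graph_def)

lemma graph_bounded_operator:
  fixes F :: "'a::chilbert \<Rightarrow> 'b::chilbert"
  assumes "bounded_clinear_map F"
  shows "is_operator (graph F)" "bounded_rel (graph F)" "Domain (graph F) = UNIV"
proof -
  obtain K where "\<And>x. norm (F x) \<le> norm x * K"
    using assms by (auto simp: bounded_clinear_map_def)
  then have "norm (F x) \<le> K * norm x" for x
    by (simp add: mult.commute)
  then show "bounded_rel (graph F)"
    unfolding bounded_rel_def by (intro exI[of _ K]) (simp add: graph_def)
  show "is_operator (graph F)"
    using bounded_clinear_map_zero[OF assms] by (auto simp: is_operator_def mulr_def in_graph_iff)
  show "Domain (graph F) = UNIV"
    by (auto simp: graph_def)
qed

lemma bounded_clinear_map_if_graph:
  fixes F :: "'a::chilbert \<Rightarrow> 'b::chilbert"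
  assumes "csubspace (graph F)" "bounded_rel (graph F)"
  shows "bounded_clinear_map F"
  unfolding bounded_clinear_map_def
proof (intro conjI allI)
  show "F (x + y) = F x + F y" for x y
    using csubspace_add[OF assms(1), of "(x, F x)" "(y, F y)"] by (simp add: in_graph_iff)
  show "F (cscale c x) = cscale c (F x)" for c x
    using csubspace_cscale[OF assms(1), of "(x, F x)" c] by (simp add: in_graph_iff cscale_prod_def)
  obtain C where "\<forall>(f, g) \<in> graph F. norm g \<le> C * norm f"
    using assms(2) unfolding bounded_rel_def by blast
  then have "norm (F x) \<le> norm x * C" for x
    by (simp add: graph_def mult.commute)
  then show "\<exists>K. \<forall>x. norm (F x) \<le> norm x * K"
    by blast
qed

lemma Domain_graph_on: "Domain {(h, F h) | h. h \<in> D} = D"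
  by auto

lemma is_operator_graph_on: "0 \<in> D \<Longrightarrow> F 0 = 0 \<Longrightarrow> is_operator {(h, F h) | h. h \<in> D}"
  by (auto simp: is_operator_def mulr_def)

definition closure_map :: "('a \<times> 'b) set \<Rightarrow> 'a::topological_space \<Rightarrow> 'b::topological_space" where
  "closure_map T h = (THE x. (h, x) \<in> closure T)"

lemma bounded_rel_closure:
  fixes T :: "('a::real_normed_vector \<times> 'b::real_normed_vector) set"
  assumes "bounded_rel T"
  shows "bounded_rel (closure T)"
proof -
  obtain C where C: "\<And>f g. (f, g) \<in> T \<Longrightarrow> norm g \<le> C * norm f"
    using assms unfolding bounded_rel_def by fast
  have "T \<subseteq> {p. norm (snd p) \<le> C * norm (fst p)}"
    using C by auto
  moreover have "closed {p. norm (snd p) \<le> C * norm (fst p)}"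
    by (intro closed_Collect_le continuous_intros)
  ultimately have "closure T \<subseteq> {p. norm (snd p) \<le> C * norm (fst p)}"
    by (rule closure_minimal)
  then show ?thesis
    unfolding bounded_rel_def by (intro exI[of _ C]) auto
qed

lemma closure_bounded_single_valued:
  fixes T :: "('a::chilbert \<times> 'b::chilbert) set"
  assumes "csubspace T" "bounded_rel T" "(h, x1) \<in> closure T" "(h, x2) \<in> closure T"
  shows "x1 = x2"
proof -
  obtain C where C: "\<forall>(f, g) \<in> closure T. norm g \<le> C * norm f"
    using bounded_rel_closure[OF assms(2)] unfolding bounded_rel_def by blast
  moreover have "(0, x1 - x2) \<in> closure T"
    using csubspace_diff[OF csubspace_closure[OF assms(1)] assms(3,4)] by simp
  ultimately have "norm (x1 - x2) \<le> C * norm (0::'a)"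
    by fastforce
  then show ?thesis
    by simp
qed

lemma closure_bounded_total:
  fixes T :: "('a::chilbert \<times> 'b::chilbert) set"
  assumes T: "csubspace T" "bounded_rel T" and dense: "closure (Domain T) = UNIV"
  shows "\<exists>x. (h, x) \<in> closure T"
proof -
  obtain C where C: "\<And>f g. (f, g) \<in> T \<Longrightarrow> norm g \<le> C * norm f"
    using assms(2) unfolding bounded_rel_def by fast
  have "h \<in> closure (Domain T)"
    using dense by simp
  then obtain hs where hs: "\<forall>n. hs n \<in> Domain T" "hs \<longlonglongrightarrow> h"
    by (meson closure_sequential)
  then have "\<forall>n. \<exists>x. (hs n, x) \<in> T"
    by blast
  then obtain xs where xs: "\<And>n. (hs n, xs n) \<in> T"
    by metis
  have "Cauchy xs"
  proof (rule Cauchy_if_dist_le[OF LIMSEQ_imp_Cauchy[OF hs(2)]])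
    fix m n
    show "dist (xs m) (xs n) \<le> C * dist (hs m) (hs n)"
      using C csubspace_diff[OF T(1) xs[of m] xs[of n]] by (simp add: dist_norm)
  qed
  then obtain x where "xs \<longlonglongrightarrow> x"
    using Cauchy_convergent_iff convergent_def by blast
  then have "(\<lambda>n. (hs n, xs n)) \<longlonglongrightarrow> (h, x)"
    using hs(2) by (intro tendsto_Pair)
  then show ?thesis
    using xs by (meson closure_sequential)
qed

lemma closure_bounded_dense_graph:
  fixes T :: "('a::chilbert \<times> 'b::chilbert) set"
  assumes "csubspace T" "bounded_rel T" "closure (Domain T) = UNIV"
  shows "closure T = graph (closure_map T)" "bounded_clinear_map (closure_map T)"
proof -
  have "(h, closure_map T h) \<in> closure T" for h
    unfolding closure_map_def
    by (rule theI') (use closure_bounded_total[OF assms] closure_bounded_single_valued[OF assms(1,2)]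
        in blast)
  then show graph: "closure T = graph (closure_map T)"
    using closure_bounded_single_valued[OF assms(1,2)] by (auto simp: graph_def)
  show "bounded_clinear_map (closure_map T)"
    using csubspace_closure[OF assms(1)] bounded_rel_closure[OF assms(2)]
    by (intro bounded_clinear_map_if_graph) (simp_all add: graph)
qed

section \<open>Resolvents of selfadjoint relations\<close>

lemma selfadjoint_cinner_symmetric:
  assumes "adj S = S" "(f, f') \<in> S"
  shows "cinner f' f = cinner f f'"
  using adjD[of f f' S f f'] assms by simp

text \<open>\<open>Im \<langle>f' - \<zeta> f, f\<rangle> = - Im \<zeta> \<parallel>f\<parallel>\<^sup>2\<close>, since \<open>\<langle>f', f\<rangle>\<close> is real.\<close>
lemma selfadjoint_Im_lower_bound:
  assumes "adj S = S" "(f, f') \<in> S"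
  shows "\<bar>Im \<zeta>\<bar> * norm f \<le> norm (f' - cscale \<zeta> f)"
proof (cases "f = 0")
  case False
  have "Im (cinner f' f) = 0"
    using selfadjoint_cinner_symmetric[OF assms] by (rule Im_cinner_eq_zero_if_symmetric)
  then have "Im (cinner (f' - cscale \<zeta> f) f) = - Im \<zeta> * (norm f)\<^sup>2"
    by (simp add: cinner_diff_left cinner_cscale_left cinner_norm)
  then have "\<bar>Im \<zeta>\<bar> * (norm f)\<^sup>2 = \<bar>Im (cinner (f' - cscale \<zeta> f) f)\<bar>"
    by (simp add: abs_mult)
  also have "\<dots> \<le> norm (f' - cscale \<zeta> f) * norm f"
    using abs_Im_le_cmod norm_cinner_le order_trans by blast
  finally show ?thesis
    using False by (simp add: power2_eq_square)
qed simp

lemma resolv_iff: "(k, f) \<in> resolv S \<zeta> \<longleftrightarrow> (f, k + cscale \<zeta> f) \<in> S"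
  by (force simp: resolv_def)

lemma csubspace_resolv:
  assumes "csubspace S"
  shows "csubspace (resolv S \<zeta>)"
  unfolding csubspace_def
proof (intro conjI ballI allI)
  show "0 \<in> resolv S \<zeta>"
    using csubspace_0[OF assms] by (simp add: resolv_iff zero_prod_def)
next
  fix p q
  assume "p \<in> resolv S \<zeta>" "q \<in> resolv S \<zeta>"
  then show "p + q \<in> resolv S \<zeta>"
    using csubspace_add[OF assms]
    by (cases p, cases q) (fastforce simp: resolv_iff cscale_add_right add_ac)
next
  fix c p
  assume "p \<in> resolv S \<zeta>"
  then show "cscale c p \<in> resolv S \<zeta>"
    using csubspace_cscale[OF assms]
    by (cases p) (fastforce simp: resolv_iff cscale_prod_def cscale_add_right cscale_cscale mult.commute)
qed

lemma selfadjoint_resolv_bound: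
  assumes "adj S = S" "(k, f) \<in> resolv S \<zeta>"
  shows "\<bar>Im \<zeta>\<bar> * norm f \<le> norm k"
  using selfadjoint_Im_lower_bound[OF assms(1), of f "k + cscale \<zeta> f" \<zeta>] assms(2)
  by (simp add: resolv_iff)

lemma selfadjoint_resolv_bounded:
  assumes "adj S = S" "Im \<zeta> \<noteq> 0"
  shows "bounded_rel (resolv S \<zeta>)"
  unfolding bounded_rel_def
proof (intro exI[of _ "1 / \<bar>Im \<zeta>\<bar>"] ballI, clarify)
  fix k f
  assume "(k, f) \<in> resolv S \<zeta>"
  then show "norm f \<le> 1 / \<bar>Im \<zeta>\<bar> * norm k"
    using selfadjoint_resolv_bound[OF assms(1)] assms(2) by (simp add: field_simps mult.commute)
qed

lemma selfadjoint_resolv_single_valued: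
  assumes "adj S = S" "Im \<zeta> \<noteq> 0" "(k, f1) \<in> resolv S \<zeta>" "(k, f2) \<in> resolv S \<zeta>"
  shows "f1 = f2"
proof -
  have "(0, f1 - f2) \<in> resolv S \<zeta>"
    using csubspace_diff[OF csubspace_resolv assms(3,4)] assms(1) csubspace_adj[of S] by simp
  then show ?thesis
    using selfadjoint_resolv_bound[OF assms(1)] assms(2) by (fastforce simp: mult_le_0_iff)
qed

lemma selfadjoint_closed_Domain_resolv:
  assumes S: "adj S = S" and \<zeta>: "Im \<zeta> \<noteq> 0"
  shows "closed (Domain (resolv S \<zeta>))"
  unfolding closed_sequential_limits
proof (intro allI impI, elim conjE)
  fix X l
  assume "\<forall>n. X n \<in> Domain (resolv S \<zeta>)" and lim: "X \<longlonglongrightarrow> l"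
  then have "\<forall>n. \<exists>f. (X n, f) \<in> resolv S \<zeta>"
    by blast
  then obtain fs where fs: "\<And>n. (X n, fs n) \<in> resolv S \<zeta>"
    by metis
  have "Cauchy fs"
  proof (rule Cauchy_if_dist_le[OF LIMSEQ_imp_Cauchy[OF lim], where c="1 / \<bar>Im \<zeta>\<bar>"])
    fix m n
    have "(X m - X n, fs m - fs n) \<in> resolv S \<zeta>"
      using csubspace_diff[OF csubspace_resolv fs fs] csubspace_adj[of S] S by simp
    then have "\<bar>Im \<zeta>\<bar> * norm (fs m - fs n) \<le> norm (X m - X n)"
      by (rule selfadjoint_resolv_bound[OF S])
    then show "dist (fs m) (fs n) \<le> 1 / \<bar>Im \<zeta>\<bar> * dist (X m) (X n)"
      using \<zeta> by (simp add: dist_norm field_simps)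
  qed
  then obtain f where f: "fs \<longlonglongrightarrow> f"
    using Cauchy_convergent_iff convergent_def by blast
  have "(\<lambda>n. (fs n, X n + cscale \<zeta> (fs n))) \<longlonglongrightarrow> (f, l + cscale \<zeta> f)"
    using lim f by (intro tendsto_intros)
  moreover have "\<forall>n. (fs n, X n + cscale \<zeta> (fs n)) \<in> S"
    using fs by (simp add: resolv_iff)
  ultimately have "(f, l + cscale \<zeta> f) \<in> S"
    using closed_sequentially[OF closed_adj[of S, unfolded S],
        of "\<lambda>n. (fs n, X n + cscale \<zeta> (fs n))"] by simp
  then show "l \<in> Domain (resolv S \<zeta>)"
    by (auto simp: resolv_iff)
qed

text \<open>A vector orthogonal to \<open>ran (S - \<zeta>)\<close> is an eigenvector of \<open>S\<^sup>* = S\<close> for \<open>\<bar>\<zeta>\<close>.\<close>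
lemma selfadjoint_Domain_resolv_orthogonal:
  assumes S: "adj S = S" and \<zeta>: "Im \<zeta> \<noteq> 0"
    and orth: "\<forall>k \<in> Domain (resolv S \<zeta>). cinner k y = 0"
  shows "y = 0"
proof -
  have "(y, cscale (cnj \<zeta>) y) \<in> adj S"
  proof (rule adjI)
    fix f f'
    assume "(f, f') \<in> S"
    then have "f' - cscale \<zeta> f \<in> Domain (resolv S \<zeta>)"
      by (force simp: resolv_def)
    then have "cinner (f' - cscale \<zeta> f) y = 0"
      using orth by blast
    then show "cinner f' y = cinner f (cscale (cnj \<zeta>) y)"
      by (simp add: cinner_diff_left cinner_cscale_left cinner_cscale_right)
  qed
  then have "(y, cscale (cnj \<zeta>) y) \<in> S"
    using S by simp
  from selfadjoint_Im_lower_bound[OF S this, of "cnj \<zeta>"]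
  have "\<bar>Im \<zeta>\<bar> * norm y \<le> 0"
    by simp
  then show ?thesis
    using \<zeta> by (simp add: mult_le_0_iff)
qed

lemma selfadjoint_Domain_resolv:
  assumes "adj S = S" "Im \<zeta> \<noteq> 0"
  shows "Domain (resolv S \<zeta>) = UNIV"
proof (rule closed_csubspace_eq_UNIV)
  have "csubspace (resolv S \<zeta>)"
    using csubspace_resolv csubspace_adj[of S] assms(1) by metis
  then show "csubspace (Domain (resolv S \<zeta>))"
    unfolding csubspace_def by (fastforce simp: zero_prod_def cscale_prod_def)
qed (use assms selfadjoint_closed_Domain_resolv selfadjoint_Domain_resolv_orthogonal in auto)

definition resolvent :: "('a::chilbert \<times> 'a) set \<Rightarrow> complex \<Rightarrow> 'a \<Rightarrow> 'a" where
  "resolvent S \<zeta> k = (THE f. (k, f) \<in> resolv S \<zeta>)"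

lemma resolv_eq_graph_resolvent:
  assumes "adj S = S" "Im \<zeta> \<noteq> 0"
  shows "resolv S \<zeta> = graph (resolvent S \<zeta>)"
proof -
  have "(k, resolvent S \<zeta> k) \<in> resolv S \<zeta>" for k
    unfolding resolvent_def
    by (rule theI') (use selfadjoint_Domain_resolv[OF assms] selfadjoint_resolv_single_valued[OF assms]
        in blast)
  then show ?thesis
    using selfadjoint_resolv_single_valued[OF assms] by (auto simp: graph_def)
qed

lemma resolvent_iff:
  assumes "adj S = S" "Im \<zeta> \<noteq> 0"
  shows "(f, k + cscale \<zeta> f) \<in> S \<longleftrightarrow> f = resolvent S \<zeta> k"
  using resolv_eq_graph_resolvent[OF assms] resolv_iff[of k f S \<zeta>] in_graph_iff by metis

lemma resolvent_mem:
  assumes "adj S = S" "Im \<zeta> \<noteq> 0"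
  shows "(resolvent S \<zeta> k, k + cscale \<zeta> (resolvent S \<zeta> k)) \<in> S"
  using resolvent_iff[OF assms] by blast

lemma resolvent_norm_le:
  assumes "adj S = S" "Im \<zeta> \<noteq> 0"
  shows "\<bar>Im \<zeta>\<bar> * norm (resolvent S \<zeta> k) \<le> norm k"
  using selfadjoint_resolv_bound[OF assms(1)] resolvent_mem[OF assms] by (simp add: resolv_iff)

lemma bounded_clinear_map_resolvent:
  assumes "adj S = S" "Im \<zeta> \<noteq> 0"
  shows "bounded_clinear_map (resolvent S \<zeta>)"
  using csubspace_resolv[of S \<zeta>] csubspace_adj[of S] selfadjoint_resolv_bounded[OF assms] assms
  by (intro bounded_clinear_map_if_graph) (simp_all add: resolv_eq_graph_resolvent[symmetric])

lemma bounded_linear_resolvent: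
  "adj S = S \<Longrightarrow> Im \<zeta> \<noteq> 0 \<Longrightarrow> bounded_linear (resolvent S \<zeta>)"
  by (rule bounded_clinear_map_imp_bounded_linear[OF bounded_clinear_map_resolvent])

section \<open>AB-generalized boundary pairs\<close>

locale AB_generalized_boundary_pair =
  fixes A :: "('a::chilbert \<times> 'a) set"
    and \<Gamma> :: "(('a \<times> 'a) \<times> ('b::chilbert \<times> 'b)) set"
  assumes closed_symmetric: "closed_symmetric A"
    and boundary_pair: "AB_boundary_pair A \<Gamma>"
begin

abbreviation "A\<^sub>0 \<equiv> bpA0 \<Gamma>"
abbreviation "ran\<Gamma>\<^sub>0 \<equiv> Range (bp0 \<Gamma>)"
abbreviation "res \<zeta> \<equiv> resolvent A\<^sub>0 \<zeta>"

lemma csubspace_\<Gamma>: "csubspace \<Gamma>"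
  and Domain_\<Gamma>_subset: "Domain \<Gamma> \<subseteq> adj A"
  and adj_A_subset_closure: "adj A \<subseteq> closure (Domain \<Gamma>)"
  and ran\<Gamma>\<^sub>0_dense: "closure ran\<Gamma>\<^sub>0 = UNIV"
  and A\<^sub>0_selfadjoint: "adj A\<^sub>0 = A\<^sub>0"
  using boundary_pair by (simp_all add: AB_boundary_pair_def)

lemma Green_identity:
  "((f, f'), (h, h')) \<in> \<Gamma> \<Longrightarrow> ((g, g'), (k, k')) \<in> \<Gamma> \<Longrightarrow>
    cinner f' g - cinner f g' = cinner h' k - cinner h k'"
  using boundary_pair unfolding AB_boundary_pair_def by blast

lemma csubspace_A: "csubspace A"
  and closed_A: "closed A"
  using closed_symmetric by (auto simp: closed_symmetric_def)

lemma \<Gamma>_add: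
  "((f, f'), (h, h')) \<in> \<Gamma> \<Longrightarrow> ((g, g'), (k, k')) \<in> \<Gamma> \<Longrightarrow> ((f + g, f' + g'), (h + k, h' + k')) \<in> \<Gamma>"
  using csubspace_add[OF csubspace_\<Gamma>, of "((f, f'), (h, h'))" "((g, g'), (k, k'))"] by simp

lemma \<Gamma>_diff:
  "((f, f'), (h, h')) \<in> \<Gamma> \<Longrightarrow> ((g, g'), (k, k')) \<in> \<Gamma> \<Longrightarrow> ((f - g, f' - g'), (h - k, h' - k')) \<in> \<Gamma>"
  using csubspace_diff[OF csubspace_\<Gamma>, of "((f, f'), (h, h'))" "((g, g'), (k, k'))"] by simp

lemma \<Gamma>_cscale:
  "((f, f'), (h, h')) \<in> \<Gamma> \<Longrightarrow> ((cscale c f, cscale c f'), (cscale c h, cscale c h')) \<in> \<Gamma>"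
  using csubspace_cscale[OF csubspace_\<Gamma>, of "((f, f'), (h, h'))" c] by (simp add: cscale_prod_def)

lemma \<Gamma>_zero: "((0, 0), (0, 0)) \<in> \<Gamma>"
  using csubspace_0[OF csubspace_\<Gamma>] by (simp add: zero_prod_def)

lemma A\<^sub>0_iff: "(f, f') \<in> A\<^sub>0 \<longleftrightarrow> (\<exists>y. ((f, f'), (0, y)) \<in> \<Gamma>)"
  by (auto simp: bpA0_def kerr_def bp0_def)

lemma ran\<Gamma>\<^sub>0_iff: "h \<in> ran\<Gamma>\<^sub>0 \<longleftrightarrow> (\<exists>f f' h'. ((f, f'), (h, h')) \<in> \<Gamma>)"
  by (auto simp: bp0_def) (metis (mono_tags, lifting) Range.intros mem_Collect_eq)

lemma csubspace_ran\<Gamma>\<^sub>0: "csubspace ran\<Gamma>\<^sub>0"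
  unfolding csubspace_def
proof (intro conjI ballI allI)
  show "0 \<in> ran\<Gamma>\<^sub>0"
    using \<Gamma>_zero by (auto simp: ran\<Gamma>\<^sub>0_iff)
  show "h + k \<in> ran\<Gamma>\<^sub>0" if "h \<in> ran\<Gamma>\<^sub>0" "k \<in> ran\<Gamma>\<^sub>0" for h k
    using that \<Gamma>_add unfolding ran\<Gamma>\<^sub>0_iff by blast
  show "cscale c h \<in> ran\<Gamma>\<^sub>0" if "h \<in> ran\<Gamma>\<^sub>0" for c h
    using that \<Gamma>_cscale unfolding ran\<Gamma>\<^sub>0_iff by blast
qed

lemma A_subset_A\<^sub>0: "A \<subseteq> A\<^sub>0"
proof -
  have "A\<^sub>0 \<subseteq> Domain \<Gamma>"
    by (auto simp: A\<^sub>0_iff)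
  then have "A\<^sub>0 \<subseteq> adj A"
    using Domain_\<Gamma>_subset by blast
  then have "A \<subseteq> adj A\<^sub>0"
    by (rule subset_adj_iff[THEN iffD1])
  then show ?thesis
    using A\<^sub>0_selfadjoint by simp
qed

lemma res_mem: "Im \<zeta> \<noteq> 0 \<Longrightarrow> (res \<zeta> k, k + cscale \<zeta> (res \<zeta> k)) \<in> A\<^sub>0"
  by (rule resolvent_mem[OF A\<^sub>0_selfadjoint])

lemma res_in_\<Gamma>:
  assumes "Im \<zeta> \<noteq> 0"
  obtains y where "((res \<zeta> k, k + cscale \<zeta> (res \<zeta> k)), (0, y)) \<in> \<Gamma>"
  using res_mem[OF assms] by (auto simp: A\<^sub>0_iff)

lemma kerr_\<Gamma>_subset: "kerr \<Gamma> \<subseteq> A"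
proof clarify
  fix f f'
  assume "(f, f') \<in> kerr \<Gamma>"
  then have f: "((f, f'), (0, 0)) \<in> \<Gamma>"
    by (simp add: kerr_def zero_prod_def)
  have "(f, f') \<in> adj (Domain \<Gamma>)"
  proof (rule adjI)
    fix g g'
    assume "(g, g') \<in> Domain \<Gamma>"
    then obtain k k' where "((g, g'), (k, k')) \<in> \<Gamma>"
      by auto
    from Green_identity[OF f this] show "cinner g' f = cinner g f'"
      by (metis cinner_commute eq_iff_diff_eq_0 cinner_zero_left cinner_zero_right diff_self)
  qed
  also have "adj (Domain \<Gamma>) \<subseteq> adj (adj A)"
    using adj_antimono[OF adj_A_subset_closure] by (simp add: adj_closure)
  also have "\<dots> \<subseteq> A"
    by (rule adj_adj_subset[OF csubspace_A closed_A])
  finally show "(f, f') \<in> A" .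
qed

lemma A_subset_kerr_\<Gamma>: "A \<subseteq> kerr \<Gamma>"
proof clarify
  fix f f'
  assume fA: "(f, f') \<in> A"
  then have "(f, f') \<in> A\<^sub>0"
    using A_subset_A\<^sub>0 by blast
  then obtain y where y: "((f, f'), (0, y)) \<in> \<Gamma>"
    by (auto simp: A\<^sub>0_iff)
  have "y = 0"
  proof (rule dense_orthogonal_eq_0[OF ran\<Gamma>\<^sub>0_dense])
    fix k
    assume "k \<in> ran\<Gamma>\<^sub>0"
    then obtain g g' k' where gk: "((g, g'), (k, k')) \<in> \<Gamma>"
      by (auto simp: ran\<Gamma>\<^sub>0_iff)
    then have "cinner f' g = cinner f g'"
      using adjD fA Domain_\<Gamma>_subset by blast
    then show "cinner k y = 0"
      using Green_identity[OF y gk] by (simp add: cinner_eq_zero_commute)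
  qed
  then show "(f, f') \<in> kerr \<Gamma>"
    using y by (simp add: kerr_def zero_prod_def)
qed

lemma kerr_\<Gamma>: "kerr \<Gamma> = A"
  using kerr_\<Gamma>_subset A_subset_kerr_\<Gamma> by (rule equalityI)

lemma \<Gamma>_decompose:
  assumes "Im \<zeta> \<noteq> 0" and f: "((f, f'), (h, h')) \<in> \<Gamma>"
  obtains u u' y where "((u, u'), (0, y)) \<in> \<Gamma>"
    "((f - u, cscale \<zeta> (f - u)), (h, h' - y)) \<in> \<Gamma>" "f' = u' + cscale \<zeta> (f - u)"
proof -
  define u where "u = res \<zeta> (f' - cscale \<zeta> f)"
  define u' where "u' = f' - cscale \<zeta> f + cscale \<zeta> u"
  obtain y where y: "((u, u'), (0, y)) \<in> \<Gamma>"
    using res_in_\<Gamma>[OF assms(1)] unfolding u_def u'_def by blast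
  have "f' - u' = cscale \<zeta> (f - u)"
    by (simp add: u'_def cscale_diff_right)
  then show ?thesis
    using that[OF y] \<Gamma>_diff[OF f y] by (simp add: algebra_simps)
qed

lemma Domain_\<Gamma>_decomposition:
  assumes "Im \<zeta> \<noteq> 0"
  shows "Domain \<Gamma> = rsum A\<^sub>0 (Nhat \<zeta> (Domain \<Gamma>))"
proof
  show "Domain \<Gamma> \<subseteq> rsum A\<^sub>0 (Nhat \<zeta> (Domain \<Gamma>))"
  proof
    fix p
    assume "p \<in> Domain \<Gamma>"
    then obtain f f' h h' where p: "p = (f, f')" and f: "((f, f'), (h, h')) \<in> \<Gamma>"
      by (metis DomainE surj_pair)
    obtain u u' y where "((u, u'), (0, y)) \<in> \<Gamma>"
      "((f - u, cscale \<zeta> (f - u)), (h, h' - y)) \<in> \<Gamma>" "f' = u' + cscale \<zeta> (f - u)"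
      by (rule \<Gamma>_decompose[OF assms f])
    then show "p \<in> rsum A\<^sub>0 (Nhat \<zeta> (Domain \<Gamma>))"
      unfolding rsum_def Nhat_def Nker_def A\<^sub>0_iff p
      by (intro CollectI exI[of _ u] exI[of _ u'] exI[of _ "f - u"] exI[of _ "cscale \<zeta> (f - u)"])
        force
  qed
  show "rsum A\<^sub>0 (Nhat \<zeta> (Domain \<Gamma>)) \<subseteq> Domain \<Gamma>"
  proof
    fix p
    assume "p \<in> rsum A\<^sub>0 (Nhat \<zeta> (Domain \<Gamma>))"
    then obtain u u' x x' y h h' where "p = (u + x, u' + x')"
      "((u, u'), (0, y)) \<in> \<Gamma>" "((x, x'), (h, h')) \<in> \<Gamma>"
      by (force simp: rsum_def A\<^sub>0_iff Nhat_def Nker_def)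
    then show "p \<in> Domain \<Gamma>"
      using \<Gamma>_add by blast
  qed
qed

text \<open>The map \<open>(f, f') \<mapsto> (v, \<zeta> v)\<close>, \<open>v = f - (A\<^sub>0 - \<zeta>)\<^sup>-\<^sup>1 (f' - \<zeta> f)\<close>, is continuous, maps
  \<open>A\<^sub>*\<close> into \<open>\<N>\<^sub>\<zeta>(A\<^sub>*)\<close> and fixes every element of \<open>\<N>\<^sub>\<zeta>(A\<^sup>*)\<close>.\<close>
lemma Nhat_adj_subset_closure:
  assumes \<zeta>: "Im \<zeta> \<noteq> 0"
  shows "Nhat \<zeta> (adj A) \<subseteq> closure (Nhat \<zeta> (Domain \<Gamma>))"
proof -
  define v where "v p = fst p - res \<zeta> (snd p - cscale \<zeta> (fst p))" for p :: "'a \<times> 'a"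
  define P where "P p = (v p, cscale \<zeta> (v p))" for p
  have "continuous_on UNIV P"
    unfolding P_def v_def
    by (intro continuous_intros continuous_on_compose2[OF linear_continuous_on[OF
          bounded_linear_resolvent[OF A\<^sub>0_selfadjoint \<zeta>]]]) auto
  moreover have "P ` Domain \<Gamma> \<subseteq> Nhat \<zeta> (Domain \<Gamma>)"
  proof
    fix q
    assume "q \<in> P ` Domain \<Gamma>"
    then obtain f f' h h' where q: "q = P (f, f')" and f: "((f, f'), (h, h')) \<in> \<Gamma>"
      by force
    obtain y where "((res \<zeta> (f' - cscale \<zeta> f), f' - cscale \<zeta> f + cscale \<zeta> (res \<zeta> (f' - cscale \<zeta> f))),
        (0, y)) \<in> \<Gamma>"
      by (rule res_in_\<Gamma>[OF \<zeta>])
    from \<Gamma>_diff[OF f this] show "q \<in> Nhat \<zeta> (Domain \<Gamma>)"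
      by (force simp: q P_def v_def Nhat_def Nker_def cscale_diff_right)
  qed
  ultimately have "P ` closure (Domain \<Gamma>) \<subseteq> closure (Nhat \<zeta> (Domain \<Gamma>))"
    using closure_subset[of "Nhat \<zeta> (Domain \<Gamma>)"]
    by (intro image_closure_subset) (auto intro: continuous_on_subset)
  moreover have "res \<zeta> 0 = 0"
    by (rule bounded_clinear_map_zero[OF bounded_clinear_map_resolvent[OF A\<^sub>0_selfadjoint \<zeta>]])
  then have "P p = p \<and> p \<in> closure (Domain \<Gamma>)" if "p \<in> Nhat \<zeta> (adj A)" for p
    using that adj_A_subset_closure by (auto simp: P_def v_def Nhat_def Nker_def)
  ultimately show ?thesis
    by (metis image_subset_iff subsetI)
qed

abbreviation "\<gamma> \<zeta> \<equiv> gammaf \<Gamma> \<zeta>"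

lemma gamma_iff: "(h, x) \<in> \<gamma> \<zeta> \<longleftrightarrow> (\<exists>h'. ((x, cscale \<zeta> x), (h, h')) \<in> \<Gamma>)"
  by (auto simp: gammaf_def)

lemma csubspace_gamma: "csubspace (\<gamma> \<zeta>)"
  unfolding csubspace_def
proof (intro conjI ballI allI)
  show "0 \<in> \<gamma> \<zeta>"
    using \<Gamma>_zero by (auto simp: gamma_iff zero_prod_def)
next
  fix p q
  assume "p \<in> \<gamma> \<zeta>" "q \<in> \<gamma> \<zeta>"
  then obtain h x h' k y k' where "p = (h, x)" "((x, cscale \<zeta> x), (h, h')) \<in> \<Gamma>"
    and "q = (k, y)" "((y, cscale \<zeta> y), (k, k')) \<in> \<Gamma>"
    by (metis gamma_iff surj_pair)
  then show "p + q \<in> \<gamma> \<zeta>"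
    using \<Gamma>_add by (fastforce simp: gamma_iff cscale_add_right)
next
  fix c p
  assume "p \<in> \<gamma> \<zeta>"
  then obtain h x h' where "p = (h, x)" "((x, cscale \<zeta> x), (h, h')) \<in> \<Gamma>"
    by (metis gamma_iff surj_pair)
  then show "cscale c p \<in> \<gamma> \<zeta>"
    using \<Gamma>_cscale[of x "cscale \<zeta> x" h h' c]
    by (auto simp: gamma_iff cscale_prod_def cscale_cscale mult.commute)
qed

lemma is_operator_gamma:
  assumes "Im \<zeta> \<noteq> 0"
  shows "is_operator (\<gamma> \<zeta>)"
proof -
  have "x = 0" if "(0, x) \<in> \<gamma> \<zeta>" for x
  proof -
    have "(x, cscale \<zeta> x) \<in> A\<^sub>0"
      using that by (auto simp: gamma_iff A\<^sub>0_iff)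
    from selfadjoint_Im_lower_bound[OF A\<^sub>0_selfadjoint this, of \<zeta>]
    have "\<bar>Im \<zeta>\<bar> * norm x \<le> 0"
      by simp
    then show ?thesis
      using assms by (simp add: mult_le_0_iff)
  qed
  then show ?thesis
    using csubspace_0[OF csubspace_gamma] by (auto simp: is_operator_def mulr_def zero_prod_def)
qed

lemma Domain_gamma:
  assumes "Im \<zeta> \<noteq> 0"
  shows "Domain (\<gamma> \<zeta>) = ran\<Gamma>\<^sub>0"
proof
  show "Domain (\<gamma> \<zeta>) \<subseteq> ran\<Gamma>\<^sub>0"
    by (auto simp: gamma_iff ran\<Gamma>\<^sub>0_iff) blast
  show "ran\<Gamma>\<^sub>0 \<subseteq> Domain (\<gamma> \<zeta>)"
  proof
    fix h
    assume "h \<in> ran\<Gamma>\<^sub>0"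
    then obtain f f' h' where f: "((f, f'), (h, h')) \<in> \<Gamma>"
      by (auto simp: ran\<Gamma>\<^sub>0_iff)
    obtain u u' y where "((f - u, cscale \<zeta> (f - u)), (h, h' - y)) \<in> \<Gamma>"
      using \<Gamma>_decompose[OF assms f] by blast
    then show "h \<in> Domain (\<gamma> \<zeta>)"
      by (auto simp: gamma_iff Domain_iff)
  qed
qed

lemma dense_Domain_gamma: "Im \<zeta> \<noteq> 0 \<Longrightarrow> closure (Domain (\<gamma> \<zeta>)) = UNIV"
  using Domain_gamma ran\<Gamma>\<^sub>0_dense by simp

lemma Range_gamma: "Range (\<gamma> \<zeta>) = Nker \<zeta> (Domain \<Gamma>)"
  unfolding Nker_def by (auto simp: gamma_iff Range_iff) blast

lemma kerr_gamma: "kerr (\<gamma> \<zeta>) = mulr (bp0 \<Gamma>)"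
  by (auto simp: gamma_iff kerr_def mulr_def bp0_def zero_prod_def)

text \<open>In operator notation: \<open>\<gamma>(\<zeta>)\<^sup>* (g - \<bar>\<zeta> f) = \<Gamma>\<^sub>1 {f, g}\<close> for \<open>{f, g} \<in> A\<^sub>0\<close>.\<close>
lemma A\<^sub>0_part_in_adj_gamma:
  assumes "((f, g), (0, y)) \<in> \<Gamma>"
  shows "(g - cscale (cnj \<zeta>) f, y) \<in> adj (\<gamma> \<zeta>)"
proof (rule adjI)
  fix h x
  assume "(h, x) \<in> \<gamma> \<zeta>"
  then obtain h' where "((x, cscale \<zeta> x), (h, h')) \<in> \<Gamma>"
    by (auto simp: gamma_iff)
  from Green_identity[OF assms this] have "cinner (g - cscale (cnj \<zeta>) f) x = cinner y h"
    by (simp add: cinner_diff_left cinner_cscale_left cinner_cscale_right)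
  then show "cinner x (g - cscale (cnj \<zeta>) f) = cinner h y"
    by (metis cinner_commute)
qed

lemma res_in_adj_gamma:
  assumes "Im \<zeta> \<noteq> 0"
  obtains y where "((res \<zeta> k, k + cscale \<zeta> (res \<zeta> k)), (0, y)) \<in> \<Gamma>" "(k, y) \<in> adj (\<gamma> (cnj \<zeta>))"
proof -
  obtain y where "((res \<zeta> k, k + cscale \<zeta> (res \<zeta> k)), (0, y)) \<in> \<Gamma>"
    by (rule res_in_\<Gamma>[OF assms])
  moreover from A\<^sub>0_part_in_adj_gamma[OF this, of "cnj \<zeta>"] have "(k, y) \<in> adj (\<gamma> (cnj \<zeta>))"
    by simp
  ultimately show ?thesis
    using that by blast
qed

lemma Domain_adj_gamma:
  assumes "Im \<zeta> \<noteq> 0"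
  shows "Domain (adj (\<gamma> \<zeta>)) = UNIV"
proof -
  have "Im (cnj \<zeta>) \<noteq> 0"
    using assms by simp
  then have "\<exists>y. (k, y) \<in> adj (\<gamma> (cnj (cnj \<zeta>)))" for k
    using res_in_adj_gamma by blast
  then show ?thesis
    by auto
qed

lemma is_operator_adj_gamma: "Im \<zeta> \<noteq> 0 \<Longrightarrow> is_operator (adj (\<gamma> \<zeta>))"
  by (rule is_operator_adj[OF dense_Domain_gamma])

text \<open>\<open>\<langle>\<gamma>(\<zeta>) h, k\<rangle> = \<langle>h, \<gamma>(\<zeta>)\<^sup>* k\<rangle>\<close> with \<open>\<gamma>(\<zeta>)\<^sup>*\<close> everywhere defined: \<open>\<gamma>(\<zeta>)\<close> is weakly, hence
  uniformly, bounded.\<close>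
lemma bounded_gamma:
  assumes "Im \<zeta> \<noteq> 0"
  shows "bounded_rel (\<gamma> \<zeta>)"
proof (rule weakly_bounded_imp_bounded)
  fix k
  obtain y where y: "(k, y) \<in> adj (\<gamma> \<zeta>)"
    using Domain_adj_gamma[OF assms] by blast
  have "cmod (cinner x k) \<le> norm y * norm h" if "(h, x) \<in> \<gamma> \<zeta>" for h x
    using adjD[OF y that] norm_cinner_le[of h y] by (simp add: mult.commute)
  then show "\<exists>c. \<forall>h x. (h, x) \<in> \<gamma> \<zeta> \<longrightarrow> cmod (cinner x k) \<le> c * norm h"
    by blast
qed

lemma bounded_adj_gamma:
  assumes \<zeta>: "Im \<zeta> \<noteq> 0"
  shows "bounded_rel (adj (\<gamma> \<zeta>))"
proof -
  obtain C0 where "\<And>h x. (h, x) \<in> \<gamma> \<zeta> \<Longrightarrow> norm x \<le> C0 * norm h"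
    using bounded_gamma[OF \<zeta>] unfolding bounded_rel_def by fast
  then have C: "norm x \<le> max C0 0 * norm h" if "(h, x) \<in> \<gamma> \<zeta>" for h x
    using that by (meson max.cobounded1 mult_right_mono norm_ge_zero order_trans)
  have "norm y \<le> max C0 0 * norm k" if ky: "(k, y) \<in> adj (\<gamma> \<zeta>)" for k y
  proof (rule norm_le_if_cinner_le_on_dense[OF ran\<Gamma>\<^sub>0_dense])
    fix h
    assume "h \<in> ran\<Gamma>\<^sub>0"
    then obtain x where hx: "(h, x) \<in> \<gamma> \<zeta>"
      using Domain_gamma[OF \<zeta>] by blast
    have "cmod (cinner y h) = cmod (cinner x k)"
      using adjD[OF ky hx] by (metis cinner_commute complex_mod_cnj)
    also have "\<dots> \<le> norm x * norm k"
      by (rule norm_cinner_le)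
    also have "\<dots> \<le> max C0 0 * norm h * norm k"
      using C[OF hx] by (intro mult_right_mono) auto
    finally show "cmod (cinner y h) \<le> max C0 0 * norm k * norm h"
      by (simp add: algebra_simps)
  qed simp
  then show ?thesis
    unfolding bounded_rel_def by blast
qed

lemma Hrel_comp_\<Gamma>_iff:
  assumes \<zeta>: "Im \<zeta> \<noteq> 0"
  shows "(k, (h, h')) \<in> Hrel A\<^sub>0 \<zeta> O \<Gamma> \<longleftrightarrow>
    (\<exists>y. (k, y) \<in> adj (\<gamma> (cnj \<zeta>)) \<and> ((0, 0), (h, h' - y)) \<in> \<Gamma>)"
proof
  assume "(k, (h, h')) \<in> Hrel A\<^sub>0 \<zeta> O \<Gamma>"
  then obtain f g where "(f, g) \<in> A\<^sub>0" "k = g - cscale \<zeta> f" and fg: "((f, g), (h, h')) \<in> \<Gamma>"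
    by (auto simp: Hrel_def resolv_def)
  moreover obtain y where y: "((f, g), (0, y)) \<in> \<Gamma>"
    using calculation(1) by (auto simp: A\<^sub>0_iff)
  ultimately show "\<exists>y. (k, y) \<in> adj (\<gamma> (cnj \<zeta>)) \<and> ((0, 0), (h, h' - y)) \<in> \<Gamma>"
    using A\<^sub>0_part_in_adj_gamma[OF y, of "cnj \<zeta>"] \<Gamma>_diff[OF fg y] by auto
next
  assume "\<exists>y. (k, y) \<in> adj (\<gamma> (cnj \<zeta>)) \<and> ((0, 0), (h, h' - y)) \<in> \<Gamma>"
  then obtain y where ky: "(k, y) \<in> adj (\<gamma> (cnj \<zeta>))" and m: "((0, 0), (h, h' - y)) \<in> \<Gamma>"
    by blast
  obtain y' where y': "((res \<zeta> k, k + cscale \<zeta> (res \<zeta> k)), (0, y')) \<in> \<Gamma>"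
    and "(k, y') \<in> adj (\<gamma> (cnj \<zeta>))"
    by (rule res_in_adj_gamma[OF \<zeta>])
  then have "y' = y"
    using adj_single_valued[OF dense_Domain_gamma _ ky] \<zeta> by simp
  then have "((res \<zeta> k, k + cscale \<zeta> (res \<zeta> k)), (h, h')) \<in> \<Gamma>"
    using \<Gamma>_add[OF y' m] by simp
  moreover have "(k, (res \<zeta> k, k + cscale \<zeta> (res \<zeta> k))) \<in> Hrel A\<^sub>0 \<zeta>"
    using res_mem[OF \<zeta>] by (force simp: Hrel_def resolv_def)
  ultimately show "(k, (h, h')) \<in> Hrel A\<^sub>0 \<zeta> O \<Gamma>"
    by blast
qed

lemma Hrel_comp_\<Gamma>:
  assumes "Im \<zeta> \<noteq> 0"
  shows "Hrel A\<^sub>0 \<zeta> O \<Gamma> = rsum {(k, (0, k')) | k k'. (k, k') \<in> adj (\<gamma> (cnj \<zeta>))} ({0} \<times> mulr \<Gamma>)"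
proof (rule set_eqI)
  fix p :: "'a \<times> 'b \<times> 'b"
  obtain k h h' where p: "p = (k, h, h')"
    using prod_cases3 by blast
  have "(k, (h, h')) \<in> rsum {(k, (0, k')) | k k'. (k, k') \<in> adj (\<gamma> (cnj \<zeta>))} ({0} \<times> mulr \<Gamma>) \<longleftrightarrow>
      (\<exists>y. (k, y) \<in> adj (\<gamma> (cnj \<zeta>)) \<and> ((0, 0), (h, h' - y)) \<in> \<Gamma>)"
    by (force simp: rsum_def mulr_def zero_prod_def)
  then show "p \<in> Hrel A\<^sub>0 \<zeta> O \<Gamma> \<longleftrightarrow> p \<in> rsum {(k, (0, k')) | k k'. (k, k') \<in> adj (\<gamma> (cnj \<zeta>))} ({0} \<times> mulr \<Gamma>)"
    unfolding p Hrel_comp_\<Gamma>_iff[OF assms] by (rule sym)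
qed

lemma Hrel_comp_bp1:
  assumes "Im \<zeta> \<noteq> 0"
  shows "Hrel A\<^sub>0 \<zeta> O bp1 \<Gamma> = rsum (adj (\<gamma> (cnj \<zeta>))) ({0} \<times> mulr (bp1 \<Gamma>))"
proof (rule set_eqI)
  fix p :: "'a \<times> 'b"
  obtain k h' where p: "p = (k, h')"
    by fastforce
  have "(k, h') \<in> Hrel A\<^sub>0 \<zeta> O bp1 \<Gamma> \<longleftrightarrow> (\<exists>h. (k, (h, h')) \<in> Hrel A\<^sub>0 \<zeta> O \<Gamma>)"
    by (force simp: bp1_def)
  moreover have "(k, h') \<in> rsum (adj (\<gamma> (cnj \<zeta>))) ({0} \<times> mulr (bp1 \<Gamma>)) \<longleftrightarrow>
      (\<exists>h y. (k, y) \<in> adj (\<gamma> (cnj \<zeta>)) \<and> ((0, 0), (h, h' - y)) \<in> \<Gamma>)"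
    by (force simp: rsum_def mulr_def bp1_def zero_prod_def)
  ultimately show "p \<in> Hrel A\<^sub>0 \<zeta> O bp1 \<Gamma> \<longleftrightarrow> p \<in> rsum (adj (\<gamma> (cnj \<zeta>))) ({0} \<times> mulr (bp1 \<Gamma>))"
    unfolding p Hrel_comp_\<Gamma>_iff[OF assms] by blast
qed

definition gamma_ext :: "complex \<Rightarrow> 'b \<Rightarrow> 'a" where
  "gamma_ext \<zeta> = closure_map (\<gamma> \<zeta>)"

lemma closure_gamma_eq_graph: "Im \<zeta> \<noteq> 0 \<Longrightarrow> closure (\<gamma> \<zeta>) = graph (gamma_ext \<zeta>)"
  and bounded_clinear_map_gamma_ext: "Im \<zeta> \<noteq> 0 \<Longrightarrow> bounded_clinear_map (gamma_ext \<zeta>)"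
  unfolding gamma_ext_def
  using closure_bounded_dense_graph[OF csubspace_gamma bounded_gamma dense_Domain_gamma] by blast+

lemma bounded_linear_gamma_ext: "Im \<zeta> \<noteq> 0 \<Longrightarrow> bounded_linear (gamma_ext \<zeta>)"
  by (rule bounded_clinear_map_imp_bounded_linear[OF bounded_clinear_map_gamma_ext])

lemma norm_gamma_ext_le: "Im \<zeta> \<noteq> 0 \<Longrightarrow> norm (gamma_ext \<zeta> h) \<le> onorm (gamma_ext \<zeta>) * norm h"
  by (rule onorm[OF bounded_linear_gamma_ext])

lemma onorm_gamma_ext_nonneg: "Im \<zeta> \<noteq> 0 \<Longrightarrow> 0 \<le> onorm (gamma_ext \<zeta>)"
  by (rule onorm_pos_le[OF bounded_linear_gamma_ext])

lemma gamma_ext_eq: "Im \<zeta> \<noteq> 0 \<Longrightarrow> (h, x) \<in> \<gamma> \<zeta> \<Longrightarrow> gamma_ext \<zeta> h = x"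
  using closure_gamma_eq_graph[of \<zeta>] closure_subset[of "\<gamma> \<zeta>"] by (auto simp: in_graph_iff)

lemma gamma_ext_in_gamma: "Im \<zeta> \<noteq> 0 \<Longrightarrow> h \<in> ran\<Gamma>\<^sub>0 \<Longrightarrow> (h, gamma_ext \<zeta> h) \<in> \<gamma> \<zeta>"
  using Domain_gamma[of \<zeta>] gamma_ext_eq[of \<zeta>] by blast

lemma mulr_bp0_iff:
  assumes \<zeta>: "Im \<zeta> \<noteq> 0"
  shows "h \<in> mulr (bp0 \<Gamma>) \<longleftrightarrow> h \<in> ran\<Gamma>\<^sub>0 \<and> gamma_ext \<zeta> h = 0"
proof -
  have "h \<in> mulr (bp0 \<Gamma>) \<longleftrightarrow> (h, 0) \<in> \<gamma> \<zeta>"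
    by (simp add: kerr_gamma[of \<zeta>, symmetric] kerr_def)
  also have "\<dots> \<longleftrightarrow> h \<in> ran\<Gamma>\<^sub>0 \<and> gamma_ext \<zeta> h = 0"
  proof
    assume "(h, 0) \<in> \<gamma> \<zeta>"
    then show "h \<in> ran\<Gamma>\<^sub>0 \<and> gamma_ext \<zeta> h = 0"
      using Domain_gamma[OF \<zeta>] gamma_ext_eq[OF \<zeta>] by blast
  next
    assume "h \<in> ran\<Gamma>\<^sub>0 \<and> gamma_ext \<zeta> h = 0"
    then show "(h, 0) \<in> \<gamma> \<zeta>"
      using gamma_ext_in_gamma[OF \<zeta>] by fastforce
  qed
  finally show ?thesis .
qed

lemma Range_closure_gamma: "Range (closure (\<gamma> \<zeta>)) \<subseteq> Nker \<zeta> (adj A)"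
proof -
  have "closure (\<gamma> \<zeta>) \<subseteq> (\<lambda>p. (snd p, cscale \<zeta> (snd p))) -` adj A"
  proof (rule closure_minimal)
    show "\<gamma> \<zeta> \<subseteq> (\<lambda>p. (snd p, cscale \<zeta> (snd p))) -` adj A"
      using Domain_\<Gamma>_subset by (force simp: gamma_iff)
    show "closed ((\<lambda>p. (snd p, cscale \<zeta> (snd p))) -` adj A)"
      by (intro continuous_closed_vimage closed_adj continuous_intros)
  qed
  then show ?thesis
    by (force simp: Nker_def)
qed

lemma closure_gamma_bounded_operator:
  assumes "Im \<zeta> \<noteq> 0"
  shows "is_operator (closure (\<gamma> \<zeta>))" "bounded_rel (closure (\<gamma> \<zeta>))"
    "Domain (closure (\<gamma> \<zeta>)) = UNIV"
  using graph_bounded_operator[OF bounded_clinear_map_gamma_ext[OF assms]]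
  by (simp_all add: closure_gamma_eq_graph[OF assms])

lemma continuous_on_gamma_ext: "Im \<zeta> \<noteq> 0 \<Longrightarrow> continuous_on UNIV (gamma_ext \<zeta>)"
  by (rule linear_continuous_on[OF bounded_linear_gamma_ext])

lemma opsum_Id_smult_resolv_iff:
  assumes "Im \<zeta> \<noteq> 0"
  shows "(x, z) \<in> opsum Id (smult_rel (\<zeta> - \<mu>) (resolv A\<^sub>0 \<zeta>)) \<longleftrightarrow> z = x + cscale (\<zeta> - \<mu>) (res \<zeta> x)"
  by (auto simp: opsum_def smult_rel_def resolv_eq_graph_resolvent[OF A\<^sub>0_selfadjoint assms]
      in_graph_iff)

text \<open>\<open>(I + (\<zeta> - \<mu>)(A\<^sub>0 - \<zeta>)\<^sup>-\<^sup>1) x\<close> is the \<open>\<N>\<^sub>\<zeta>\<close>-component of \<open>(x, \<mu> x)\<close>.\<close>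
lemma gamma_shift:
  assumes \<zeta>: "Im \<zeta> \<noteq> 0" and hx: "(h, x) \<in> \<gamma> \<mu>"
  shows "(h, x + cscale (\<zeta> - \<mu>) (res \<zeta> x)) \<in> \<gamma> \<zeta>"
proof -
  obtain h' where x: "((x, cscale \<mu> x), (h, h')) \<in> \<Gamma>"
    using hx by (auto simp: gamma_iff)
  define v where "v = res \<zeta> x"
  obtain y where "((v, x + cscale \<zeta> v), (0, y)) \<in> \<Gamma>"
    unfolding v_def by (rule res_in_\<Gamma>[OF \<zeta>])
  from \<Gamma>_add[OF x \<Gamma>_cscale[OF this, of "\<zeta> - \<mu>"]]
  have "((x + cscale (\<zeta> - \<mu>) v, cscale \<mu> x + cscale (\<zeta> - \<mu>) (x + cscale \<zeta> v)),
      (h, h' + cscale (\<zeta> - \<mu>) y)) \<in> \<Gamma>"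
    by simp
  moreover have "cscale \<mu> x + cscale (\<zeta> - \<mu>) (x + cscale \<zeta> v)
      = (cscale \<mu> x + cscale (\<zeta> - \<mu>) x) + cscale ((\<zeta> - \<mu>) * \<zeta>) v"
    by (simp add: cscale_add_right cscale_cscale add.assoc)
  also have "cscale \<mu> x + cscale (\<zeta> - \<mu>) x = cscale \<zeta> x"
    by (simp add: cscale_add_left[symmetric])
  also have "cscale \<zeta> x + cscale ((\<zeta> - \<mu>) * \<zeta>) v = cscale \<zeta> (x + cscale (\<zeta> - \<mu>) v)"
    by (simp add: cscale_add_right cscale_cscale mult.commute)
  ultimately show ?thesis
    by (auto simp: gamma_iff v_def)
qed

lemma gamma_ext_shift:
  assumes \<zeta>: "Im \<zeta> \<noteq> 0" and \<mu>: "Im \<mu> \<noteq> 0"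
  shows "gamma_ext \<zeta> h = gamma_ext \<mu> h + cscale (\<zeta> - \<mu>) (res \<zeta> (gamma_ext \<mu> h))"
proof -
  define T where "T x = x + cscale (\<zeta> - \<mu>) (res \<zeta> x)" for x
  have "bounded_linear (\<lambda>x. cscale (\<zeta> - \<mu>) (res \<zeta> x))"
    by (rule bounded_linear_compose[OF bounded_bilinear.bounded_linear_right[OF bounded_bilinear_cscale]
          bounded_linear_resolvent[OF A\<^sub>0_selfadjoint \<zeta>]])
  then have "bounded_linear T"
    unfolding T_def by (rule bounded_linear_add[OF bounded_linear_ident])
  then have "continuous_on UNIV (\<lambda>h. T (gamma_ext \<mu> h))"
    by (rule linear_continuous_on[OF bounded_linear_compose[OF _ bounded_linear_gamma_ext[OF \<mu>]]])
  moreover have "continuous_on UNIV (gamma_ext \<zeta>)"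
    by (rule continuous_on_gamma_ext[OF \<zeta>])
  moreover have "T (gamma_ext \<mu> h) = gamma_ext \<zeta> h" if "h \<in> ran\<Gamma>\<^sub>0" for h
    using gamma_shift[OF \<zeta> gamma_ext_in_gamma[OF \<mu> that]] gamma_ext_eq[OF \<zeta>] by (simp add: T_def)
  ultimately have "T (gamma_ext \<mu> h) = gamma_ext \<zeta> h"
    by (rule dense_continuous_eq[OF ran\<Gamma>\<^sub>0_dense])
  then show ?thesis
    by (simp add: T_def)
qed

lemma closure_gamma_shift:
  assumes \<zeta>: "Im \<zeta> \<noteq> 0" and \<mu>: "Im \<mu> \<noteq> 0"
  shows "closure (\<gamma> \<zeta>) = closure (\<gamma> \<mu>) O opsum Id (smult_rel (\<zeta> - \<mu>) (resolv A\<^sub>0 \<zeta>))"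
proof (rule set_eqI)
  fix p :: "'b \<times> 'a"
  obtain h w where p: "p = (h, w)"
    by fastforce
  have "p \<in> closure (\<gamma> \<zeta>) \<longleftrightarrow> w = gamma_ext \<mu> h + cscale (\<zeta> - \<mu>) (res \<zeta> (gamma_ext \<mu> h))"
    by (simp add: p closure_gamma_eq_graph[OF \<zeta>] in_graph_iff gamma_ext_shift[OF \<zeta> \<mu>])
  also have "\<dots> \<longleftrightarrow> p \<in> closure (\<gamma> \<mu>) O opsum Id (smult_rel (\<zeta> - \<mu>) (resolv A\<^sub>0 \<zeta>))"
    by (simp add: p relcomp.simps closure_gamma_eq_graph[OF \<mu>] in_graph_iff
        opsum_Id_smult_resolv_iff[OF \<zeta>])
  finally show "p \<in> closure (\<gamma> \<zeta>) \<longleftrightarrow> p \<in> closure (\<gamma> \<mu>) O opsum Id (smult_rel (\<zeta> - \<mu>) (resolv A\<^sub>0 \<zeta>))" .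
qed

abbreviation "M \<zeta> \<equiv> weyl \<Gamma> \<zeta>"

lemma weyl_iff: "(h, k) \<in> M \<zeta> \<longleftrightarrow> (\<exists>f. ((f, cscale \<zeta> f), (h, k)) \<in> \<Gamma>)"
  by (auto simp: weyl_def)

lemma mem_weyl_iff: "p \<in> M \<zeta> \<longleftrightarrow> (\<exists>f. ((f, cscale \<zeta> f), p) \<in> \<Gamma>)"
  by (simp add: weyl_def)

lemma csubspace_weyl: "csubspace (M \<zeta>)"
  unfolding csubspace_def
proof (intro conjI ballI allI)
  show "0 \<in> M \<zeta>"
    unfolding mem_weyl_iff using \<Gamma>_zero by (intro exI[of _ 0]) (simp add: zero_prod_def)
next
  fix p q
  assume "p \<in> M \<zeta>" "q \<in> M \<zeta>"
  then obtain f g where "((f, cscale \<zeta> f), p) \<in> \<Gamma>" "((g, cscale \<zeta> g), q) \<in> \<Gamma>"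
    unfolding mem_weyl_iff by blast
  from csubspace_add[OF csubspace_\<Gamma> this] have "((f + g, cscale \<zeta> (f + g)), p + q) \<in> \<Gamma>"
    by (simp add: cscale_add_right)
  then show "p + q \<in> M \<zeta>"
    unfolding mem_weyl_iff by blast
next
  fix c p
  assume "p \<in> M \<zeta>"
  then obtain f where "((f, cscale \<zeta> f), p) \<in> \<Gamma>"
    unfolding mem_weyl_iff by blast
  from csubspace_cscale[OF csubspace_\<Gamma> this, of c]
  have "((cscale c f, cscale \<zeta> (cscale c f)), cscale c p) \<in> \<Gamma>"
    by (simp add: cscale_prod_def cscale_cscale mult.commute)
  then show "cscale c p \<in> M \<zeta>"
    unfolding mem_weyl_iff by blast
qed

lemma weyl_single_valued:
  assumes \<zeta>: "Im \<zeta> \<noteq> 0" and "(h, k1) \<in> M \<zeta>" "(h, k2) \<in> M \<zeta>"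
  shows "k1 = k2"
proof -
  obtain f1 f2 where "((f1, cscale \<zeta> f1), (h, k1)) \<in> \<Gamma>" "((f2, cscale \<zeta> f2), (h, k2)) \<in> \<Gamma>"
    using assms by (auto simp: weyl_iff)
  from \<Gamma>_diff[OF this] have "((f1 - f2, cscale \<zeta> (f1 - f2)), (0, k1 - k2)) \<in> \<Gamma>"
    by (simp add: cscale_diff_right)
  moreover from this have "(0, f1 - f2) \<in> \<gamma> \<zeta>"
    by (auto simp: gamma_iff)
  then have "f1 - f2 \<in> mulr (\<gamma> \<zeta>)"
    by (simp add: mulr_def)
  then have "f1 - f2 = 0"
    using is_operator_gamma[OF \<zeta>] by (simp add: is_operator_def)
  ultimately have k: "((0, 0), (0, k1 - k2)) \<in> \<Gamma>"
    by simp
  have "k1 - k2 = 0"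
  proof (rule dense_orthogonal_eq_0[OF ran\<Gamma>\<^sub>0_dense])
    fix k
    assume "k \<in> ran\<Gamma>\<^sub>0"
    then obtain g g' k' where "((g, g'), (k, k')) \<in> \<Gamma>"
      by (auto simp: ran\<Gamma>\<^sub>0_iff)
    from Green_identity[OF k this] show "cinner k (k1 - k2) = 0"
      by (simp add: cinner_eq_zero_commute)
  qed
  then show ?thesis
    by simp
qed

lemma Domain_weyl:
  assumes "Im \<zeta> \<noteq> 0"
  shows "Domain (M \<zeta>) = ran\<Gamma>\<^sub>0"
proof -
  have "h \<in> Domain (M \<zeta>) \<longleftrightarrow> h \<in> Domain (\<gamma> \<zeta>)" for h
    unfolding Domain_iff weyl_iff gamma_iff by blast
  then show ?thesis
    using Domain_gamma[OF assms] by blast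
qed

lemma dense_Domain_weyl: "Im \<zeta> \<noteq> 0 \<Longrightarrow> closure (Domain (M \<zeta>)) = UNIV"
  by (simp add: Domain_weyl ran\<Gamma>\<^sub>0_dense)

definition weyl_map :: "complex \<Rightarrow> 'b \<Rightarrow> 'b" where
  "weyl_map \<zeta> h = (THE k. (h, k) \<in> M \<zeta>)"

lemma weyl_eq_weyl_map:
  assumes "Im \<zeta> \<noteq> 0" "(h, k) \<in> M \<zeta>"
  shows "weyl_map \<zeta> h = k"
  unfolding weyl_map_def
proof (rule the_equality)
  show "(h, k) \<in> M \<zeta>"
    by fact
  show "k' = k" if "(h, k') \<in> M \<zeta>" for k'
    using weyl_single_valued[OF assms(1) that assms(2)] .
qed

lemma weyl_iff_weyl_map:
  assumes "Im \<zeta> \<noteq> 0"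
  shows "(h, k) \<in> M \<zeta> \<longleftrightarrow> h \<in> ran\<Gamma>\<^sub>0 \<and> k = weyl_map \<zeta> h"
proof
  assume "(h, k) \<in> M \<zeta>"
  then show "h \<in> ran\<Gamma>\<^sub>0 \<and> k = weyl_map \<zeta> h"
    using weyl_eq_weyl_map[OF assms] Domain_weyl[OF assms] by auto
next
  assume "h \<in> ran\<Gamma>\<^sub>0 \<and> k = weyl_map \<zeta> h"
  then have "h \<in> Domain (M \<zeta>)" "k = weyl_map \<zeta> h"
    using Domain_weyl[OF assms] by auto
  then show "(h, k) \<in> M \<zeta>"
    using weyl_eq_weyl_map[OF assms] by force
qed

lemma weyl_map_in_weyl: "Im \<zeta> \<noteq> 0 \<Longrightarrow> h \<in> ran\<Gamma>\<^sub>0 \<Longrightarrow> (h, weyl_map \<zeta> h) \<in> M \<zeta>"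
  by (simp add: weyl_iff_weyl_map)

lemma weyl_eq_graph_on: "Im \<zeta> \<noteq> 0 \<Longrightarrow> M \<zeta> = {(h, weyl_map \<zeta> h) | h. h \<in> ran\<Gamma>\<^sub>0}"
  by (auto simp: weyl_iff_weyl_map)

lemma weyl_map_add:
  assumes "Im \<zeta> \<noteq> 0" "h \<in> ran\<Gamma>\<^sub>0" "k \<in> ran\<Gamma>\<^sub>0"
  shows "weyl_map \<zeta> (h + k) = weyl_map \<zeta> h + weyl_map \<zeta> k"
proof -
  have "(h + k, weyl_map \<zeta> h + weyl_map \<zeta> k) \<in> M \<zeta>"
    using csubspace_add[OF csubspace_weyl weyl_map_in_weyl weyl_map_in_weyl] assms by simp
  then show ?thesis
    by (rule weyl_eq_weyl_map[OF assms(1)])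
qed

lemma weyl_map_cscale:
  assumes "Im \<zeta> \<noteq> 0" "h \<in> ran\<Gamma>\<^sub>0"
  shows "weyl_map \<zeta> (cscale c h) = cscale c (weyl_map \<zeta> h)"
proof -
  have "(cscale c h, cscale c (weyl_map \<zeta> h)) \<in> M \<zeta>"
    using csubspace_cscale[OF csubspace_weyl weyl_map_in_weyl[OF assms], of c] by (simp add: cscale_prod_def)
  then show ?thesis
    by (rule weyl_eq_weyl_map[OF assms(1)])
qed

lemma weyl_map_zero: "Im \<zeta> \<noteq> 0 \<Longrightarrow> weyl_map \<zeta> 0 = 0"
  using csubspace_0[OF csubspace_weyl] by (intro weyl_eq_weyl_map) (simp_all add: zero_prod_def)

lemma is_operator_weyl: "Im \<zeta> \<noteq> 0 \<Longrightarrow> is_operator (M \<zeta>)"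
  unfolding weyl_eq_graph_on
  by (rule is_operator_graph_on[OF csubspace_0[OF csubspace_ran\<Gamma>\<^sub>0]]) (rule weyl_map_zero)

lemma weyl_map_\<Gamma>:
  assumes \<zeta>: "Im \<zeta> \<noteq> 0" and h: "h \<in> ran\<Gamma>\<^sub>0"
  shows "((gamma_ext \<zeta> h, cscale \<zeta> (gamma_ext \<zeta> h)), (h, weyl_map \<zeta> h)) \<in> \<Gamma>"
proof -
  obtain f where f: "((f, cscale \<zeta> f), (h, weyl_map \<zeta> h)) \<in> \<Gamma>"
    using weyl_map_in_weyl[OF \<zeta> h] by (auto simp: weyl_iff)
  then have "gamma_ext \<zeta> h = f"
    by (intro gamma_ext_eq[OF \<zeta>]) (auto simp: gamma_iff)
  then show ?thesis
    using f by simp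
qed

lemma weyl_map_Green:
  assumes "Im \<zeta> \<noteq> 0" "Im \<nu> \<noteq> 0" "h \<in> ran\<Gamma>\<^sub>0" "k \<in> ran\<Gamma>\<^sub>0"
  shows "cinner (weyl_map \<zeta> h) k - cinner h (weyl_map \<nu> k)
    = (\<zeta> - cnj \<nu>) * cinner (gamma_ext \<zeta> h) (gamma_ext \<nu> k)"
  using Green_identity[OF weyl_map_\<Gamma>[OF assms(1,3)] weyl_map_\<Gamma>[OF assms(2,4)]]
  by (simp add: cinner_cscale_left cinner_cscale_right algebra_simps)

lemma weyl_map_cnj:
  assumes "Im \<zeta> \<noteq> 0" "h \<in> ran\<Gamma>\<^sub>0" "k \<in> ran\<Gamma>\<^sub>0"
  shows "cinner (weyl_map \<zeta> h) k = cinner h (weyl_map (cnj \<zeta>) k)"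
  using weyl_map_Green[OF assms(1) _ assms(2,3), of "cnj \<zeta>"] assms(1) by simp

lemma weyl_subset_adj:
  assumes \<zeta>: "Im \<zeta> \<noteq> 0"
  shows "M \<zeta> \<subseteq> adj (M (cnj \<zeta>))"
proof
  fix p
  assume "p \<in> M \<zeta>"
  then obtain h where h: "h \<in> ran\<Gamma>\<^sub>0" and p: "p = (h, weyl_map \<zeta> h)"
    using weyl_eq_graph_on[OF \<zeta>] by blast
  have \<zeta>': "Im (cnj \<zeta>) \<noteq> 0"
    using \<zeta> by simp
  show "p \<in> adj (M (cnj \<zeta>))"
    unfolding p
  proof (rule adjI)
    fix k k'
    assume "(k, k') \<in> M (cnj \<zeta>)"
    then have "k \<in> ran\<Gamma>\<^sub>0" "k' = weyl_map (cnj \<zeta>) k"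
      using weyl_eq_graph_on[OF \<zeta>'] by auto
    then show "cinner k' h = cinner k (weyl_map \<zeta> h)"
      using weyl_map_cnj[OF \<zeta>' _ h] by simp
  qed
qed

lemma adj_weyl_iff:
  assumes \<zeta>: "Im \<zeta> \<noteq> 0" and h: "h \<in> ran\<Gamma>\<^sub>0"
  shows "(h, k) \<in> adj (M \<zeta>) \<longleftrightarrow> k = weyl_map (cnj \<zeta>) h"
proof
  have "Im (cnj \<zeta>) \<noteq> 0"
    using \<zeta> by simp
  then have mem: "(h, weyl_map (cnj \<zeta>) h) \<in> adj (M \<zeta>)"
    using weyl_subset_adj weyl_map_in_weyl[OF _ h] by fastforce
  show "k = weyl_map (cnj \<zeta>) h" if "(h, k) \<in> adj (M \<zeta>)"
    using adj_single_valued[OF dense_Domain_weyl[OF \<zeta>] that mem] .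
  show "k = weyl_map (cnj \<zeta>) h \<Longrightarrow> (h, k) \<in> adj (M \<zeta>)"
    using mem by simp
qed

lemma weyl_and_adj_iff:
  assumes "Im \<zeta> \<noteq> 0" "h \<in> ran\<Gamma>\<^sub>0"
  shows "(h, k) \<in> M \<zeta> \<and> (h, k') \<in> adj (M \<zeta>) \<longleftrightarrow> k = weyl_map \<zeta> h \<and> k' = weyl_map (cnj \<zeta>) h"
  using weyl_iff_weyl_map[OF assms(1)] adj_weyl_iff[OF assms] assms(2) by blast

definition Im_weyl_map :: "complex \<Rightarrow> 'b \<Rightarrow> 'b" where
  "Im_weyl_map \<zeta> h = cscale (1 / (2 * \<i>)) (weyl_map \<zeta> h - weyl_map (cnj \<zeta>) h)"

lemma ImM_weyl_eq:
  assumes \<zeta>: "Im \<zeta> \<noteq> 0"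
  shows "ImM ran\<Gamma>\<^sub>0 (M \<zeta>) = {(h, Im_weyl_map \<zeta> h) | h. h \<in> ran\<Gamma>\<^sub>0}"
proof (rule set_eqI)
  fix p :: "'b \<times> 'b"
  obtain h w where p: "p = (h, w)"
    by fastforce
  have "p \<in> ImM ran\<Gamma>\<^sub>0 (M \<zeta>) \<longleftrightarrow> (\<exists>k k'. h \<in> ran\<Gamma>\<^sub>0 \<and> ((h, k) \<in> M \<zeta> \<and> (h, k') \<in> adj (M \<zeta>))
      \<and> w = cscale (1 / (2 * \<i>)) (k - k'))"
    unfolding p ImM_def by blast
  also have "\<dots> \<longleftrightarrow> h \<in> ran\<Gamma>\<^sub>0 \<and> w = Im_weyl_map \<zeta> h"
    by (cases "h \<in> ran\<Gamma>\<^sub>0") (simp_all add: weyl_and_adj_iff[OF \<zeta>] Im_weyl_map_def)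
  finally show "p \<in> ImM ran\<Gamma>\<^sub>0 (M \<zeta>) \<longleftrightarrow> p \<in> {(h, Im_weyl_map \<zeta> h) | h. h \<in> ran\<Gamma>\<^sub>0}"
    unfolding p by blast
qed

lemma cinner_Im_weyl_map:
  assumes \<zeta>: "Im \<zeta> \<noteq> 0" and h: "h \<in> ran\<Gamma>\<^sub>0" and k: "k \<in> ran\<Gamma>\<^sub>0"
  shows "cinner (Im_weyl_map \<zeta> h) k = of_real (Im \<zeta>) * cinner (gamma_ext \<zeta> h) (gamma_ext \<zeta> k)"
proof -
  have "cinner (weyl_map \<zeta> h) k - cinner (weyl_map (cnj \<zeta>) h) k
      = (\<zeta> - cnj \<zeta>) * cinner (gamma_ext \<zeta> h) (gamma_ext \<zeta> k)"
    using weyl_map_Green[OF \<zeta> \<zeta> h k] weyl_map_cnj[of "cnj \<zeta>" h k] \<zeta> h k by simp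
  moreover have "\<zeta> - cnj \<zeta> = 2 * \<i> * of_real (Im \<zeta>)"
    by (simp add: complex_diff_cnj)
  ultimately show ?thesis
    by (simp add: Im_weyl_map_def cinner_cscale_left cinner_diff_left)
qed

lemma norm_Im_weyl_map_le:
  assumes \<zeta>: "Im \<zeta> \<noteq> 0" and h: "h \<in> ran\<Gamma>\<^sub>0"
  shows "norm (Im_weyl_map \<zeta> h) \<le> \<bar>Im \<zeta>\<bar> * (onorm (gamma_ext \<zeta>))\<^sup>2 * norm h"
proof (rule norm_le_if_cinner_le_on_dense[OF ran\<Gamma>\<^sub>0_dense])
  fix k
  assume k: "k \<in> ran\<Gamma>\<^sub>0"
  have "cmod (cinner (Im_weyl_map \<zeta> h) k) \<le> \<bar>Im \<zeta>\<bar> * (norm (gamma_ext \<zeta> h) * norm (gamma_ext \<zeta> k))"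
    unfolding cinner_Im_weyl_map[OF \<zeta> h k] norm_mult norm_of_real
    by (intro mult_left_mono norm_cinner_le) auto
  also have "\<dots> \<le> \<bar>Im \<zeta>\<bar> * ((onorm (gamma_ext \<zeta>) * norm h) * (onorm (gamma_ext \<zeta>) * norm k))"
    by (intro mult_left_mono mult_mono norm_gamma_ext_le[OF \<zeta>]) (auto simp: onorm_gamma_ext_nonneg[OF \<zeta>])
  finally show "cmod (cinner (Im_weyl_map \<zeta> h) k) \<le> \<bar>Im \<zeta>\<bar> * (onorm (gamma_ext \<zeta>))\<^sup>2 * norm h * norm k"
    by (simp add: power2_eq_square algebra_simps)
qed simp

lemma Im_weyl_map_eq_0_iff:
  assumes \<zeta>: "Im \<zeta> \<noteq> 0" and h: "h \<in> ran\<Gamma>\<^sub>0"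
  shows "Im_weyl_map \<zeta> h = 0 \<longleftrightarrow> gamma_ext \<zeta> h = 0"
proof
  assume "Im_weyl_map \<zeta> h = 0"
  then have "of_real (Im \<zeta>) * cinner (gamma_ext \<zeta> h) (gamma_ext \<zeta> h) = 0"
    using cinner_Im_weyl_map[OF \<zeta> h h] by simp
  then show "gamma_ext \<zeta> h = 0"
    using \<zeta> by (simp add: cinner_eq_zero_iff)
next
  assume "gamma_ext \<zeta> h = 0"
  then show "Im_weyl_map \<zeta> h = 0"
    using cinner_Im_weyl_map[OF \<zeta> h]
    by (intro dense_orthogonal_eq_0[OF ran\<Gamma>\<^sub>0_dense]) (simp add: cinner_eq_zero_commute)
qed

lemma ImM_weyl_properties:
  assumes \<zeta>: "Im \<zeta> \<noteq> 0"
  shows "is_operator (ImM ran\<Gamma>\<^sub>0 (M \<zeta>))" "bounded_rel (ImM ran\<Gamma>\<^sub>0 (M \<zeta>))"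
    "kerr (ImM ran\<Gamma>\<^sub>0 (M \<zeta>)) = mulr (bp0 \<Gamma>)"
proof -
  have \<zeta>': "Im (cnj \<zeta>) \<noteq> 0"
    using \<zeta> by simp
  show "is_operator (ImM ran\<Gamma>\<^sub>0 (M \<zeta>))"
    unfolding ImM_weyl_eq[OF \<zeta>]
    by (rule is_operator_graph_on[OF csubspace_0[OF csubspace_ran\<Gamma>\<^sub>0]])
      (simp add: Im_weyl_map_def weyl_map_zero[OF \<zeta>] weyl_map_zero[OF \<zeta>'])
  show "bounded_rel (ImM ran\<Gamma>\<^sub>0 (M \<zeta>))"
    unfolding ImM_weyl_eq[OF \<zeta>] bounded_rel_def using norm_Im_weyl_map_le[OF \<zeta>] by blast
  show "kerr (ImM ran\<Gamma>\<^sub>0 (M \<zeta>)) = mulr (bp0 \<Gamma>)"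
    using Im_weyl_map_eq_0_iff[OF \<zeta>] mulr_bp0_iff[OF \<zeta>]
    by (auto simp: kerr_def ImM_weyl_eq[OF \<zeta>])
qed

definition Re_weyl_map :: "complex \<Rightarrow> 'b \<Rightarrow> 'b" where
  "Re_weyl_map \<mu> h = cscale (1 / 2) (weyl_map \<mu> h + weyl_map (cnj \<mu>) h)"

lemma ReM_weyl_eq:
  assumes \<mu>: "Im \<mu> \<noteq> 0"
  shows "ReM ran\<Gamma>\<^sub>0 (M \<mu>) = {(h, Re_weyl_map \<mu> h) | h. h \<in> ran\<Gamma>\<^sub>0}"
proof (rule set_eqI)
  fix p :: "'b \<times> 'b"
  obtain h w where p: "p = (h, w)"
    by fastforce
  have "p \<in> ReM ran\<Gamma>\<^sub>0 (M \<mu>) \<longleftrightarrow> (\<exists>k k'. h \<in> ran\<Gamma>\<^sub>0 \<and> ((h, k) \<in> M \<mu> \<and> (h, k') \<in> adj (M \<mu>))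
      \<and> w = cscale (1 / 2) (k + k'))"
    unfolding p ReM_def by blast
  also have "\<dots> \<longleftrightarrow> h \<in> ran\<Gamma>\<^sub>0 \<and> w = Re_weyl_map \<mu> h"
    by (cases "h \<in> ran\<Gamma>\<^sub>0") (simp_all add: weyl_and_adj_iff[OF \<mu>] Re_weyl_map_def)
  finally show "p \<in> ReM ran\<Gamma>\<^sub>0 (M \<mu>) \<longleftrightarrow> p \<in> {(h, Re_weyl_map \<mu> h) | h. h \<in> ran\<Gamma>\<^sub>0}"
    unfolding p by blast
qed

lemma Re_weyl_map_symmetric:
  assumes \<mu>: "Im \<mu> \<noteq> 0" and "h \<in> ran\<Gamma>\<^sub>0" "k \<in> ran\<Gamma>\<^sub>0"
  shows "cinner (Re_weyl_map \<mu> k) h = cinner k (Re_weyl_map \<mu> h)"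
proof -
  have "Im (cnj \<mu>) \<noteq> 0"
    using \<mu> by simp
  then show ?thesis
    using weyl_map_cnj[OF \<mu>, of k h] weyl_map_cnj[of "cnj \<mu>" k h] assms
    by (simp add: Re_weyl_map_def cinner_cscale_left cinner_cscale_right cinner_add_left
        cinner_add_right algebra_simps)
qed

lemma ReM_weyl_properties:
  assumes \<mu>: "Im \<mu> \<noteq> 0"
  defines "E \<equiv> ReM ran\<Gamma>\<^sub>0 (M \<mu>)"
  shows "is_operator E" "closure (Domain E) = UNIV" "E \<subseteq> adj E"
proof -
  have \<mu>': "Im (cnj \<mu>) \<noteq> 0"
    using \<mu> by simp
  show "is_operator E"
    unfolding E_def ReM_weyl_eq[OF \<mu>]
    by (rule is_operator_graph_on[OF csubspace_0[OF csubspace_ran\<Gamma>\<^sub>0]])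
      (simp add: Re_weyl_map_def weyl_map_zero[OF \<mu>] weyl_map_zero[OF \<mu>'])
  show "closure (Domain E) = UNIV"
    unfolding E_def ReM_weyl_eq[OF \<mu>] Domain_graph_on by (rule ran\<Gamma>\<^sub>0_dense)
  show "E \<subseteq> adj E"
    unfolding E_def ReM_weyl_eq[OF \<mu>]
    using Re_weyl_map_symmetric[OF \<mu>] by (auto intro!: adjI)
qed

definition M0_map :: "complex \<Rightarrow> complex \<Rightarrow> 'b \<Rightarrow> 'b" where
  "M0_map \<mu> z h = weyl_map z h - Re_weyl_map \<mu> h"

definition M0 :: "complex \<Rightarrow> complex \<Rightarrow> ('b \<times> 'b) set" where
  "M0 \<mu> z = {(h, M0_map \<mu> z h) | h. h \<in> ran\<Gamma>\<^sub>0}"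

lemma Domain_M0: "Domain (M0 \<mu> z) = ran\<Gamma>\<^sub>0"
  unfolding M0_def by (rule Domain_graph_on)

lemma weyl_eq_opsum_M0:
  assumes "Im \<mu> \<noteq> 0" "Im z \<noteq> 0"
  shows "M z = opsum (ReM ran\<Gamma>\<^sub>0 (M \<mu>)) (M0 \<mu> z)"
  unfolding ReM_weyl_eq[OF assms(1)] weyl_eq_graph_on[OF assms(2)]
  by (auto simp: M0_def opsum_def M0_map_def)

lemma csubspace_M0:
  assumes \<mu>: "Im \<mu> \<noteq> 0" and z: "Im z \<noteq> 0"
  shows "csubspace (M0 \<mu> z)"
proof -
  have \<mu>': "Im (cnj \<mu>) \<noteq> 0"
    using \<mu> by simp
  have "M0_map \<mu> z (h + k) = M0_map \<mu> z h + M0_map \<mu> z k" if "h \<in> ran\<Gamma>\<^sub>0" "k \<in> ran\<Gamma>\<^sub>0" for h k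
    using that
    by (simp add: M0_map_def Re_weyl_map_def weyl_map_add[OF z] weyl_map_add[OF \<mu>]
        weyl_map_add[OF \<mu>'] cscale_add_right algebra_simps)
  moreover have "M0_map \<mu> z (cscale c h) = cscale c (M0_map \<mu> z h)" if "h \<in> ran\<Gamma>\<^sub>0" for c h
    using that
    by (simp add: M0_map_def Re_weyl_map_def weyl_map_cscale[OF z] weyl_map_cscale[OF \<mu>]
        weyl_map_cscale[OF \<mu>'] cscale_add_right cscale_diff_right cscale_cscale mult.commute)
  moreover have "M0_map \<mu> z 0 = 0"
    by (simp add: M0_map_def Re_weyl_map_def weyl_map_zero[OF z] weyl_map_zero[OF \<mu>]
        weyl_map_zero[OF \<mu>'])
  ultimately show ?thesis
    using csubspace_ran\<Gamma>\<^sub>0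
    unfolding csubspace_def M0_def by (auto simp: zero_prod_def cscale_prod_def)
qed

lemma cinner_M0_map:
  assumes \<mu>: "Im \<mu> \<noteq> 0" and z: "Im z \<noteq> 0" and h: "h \<in> ran\<Gamma>\<^sub>0" and k: "k \<in> ran\<Gamma>\<^sub>0"
  shows "cinner (M0_map \<mu> z h) k = (z - \<mu>) * cinner (gamma_ext z h) (gamma_ext (cnj \<mu>) k)
     - (1 / 2) * ((cnj \<mu> - \<mu>) * cinner (gamma_ext (cnj \<mu>) h) (gamma_ext (cnj \<mu>) k))"
proof -
  have \<mu>': "Im (cnj \<mu>) \<noteq> 0"
    using \<mu> by simp
  have "cinner (M0_map \<mu> z h) k = cinner (weyl_map z h) k - (1/2) * cinner (weyl_map \<mu> h) k
      - (1/2) * cinner (weyl_map (cnj \<mu>) h) k"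
    by (simp add: M0_map_def Re_weyl_map_def cinner_diff_left cinner_cscale_left cinner_add_left
        algebra_simps)
  then show ?thesis
    using weyl_map_Green[OF z \<mu>' h k] weyl_map_cnj[OF \<mu> h k] weyl_map_Green[OF \<mu>' \<mu>' h k]
    by (simp add: field_simps) algebra
qed

lemma bounded_M0:
  assumes \<mu>: "Im \<mu> \<noteq> 0" and z: "Im z \<noteq> 0"
  shows "bounded_rel (M0 \<mu> z)"
proof -
  have \<mu>': "Im (cnj \<mu>) \<noteq> 0"
    using \<mu> by simp
  define a where "a = onorm (gamma_ext z)"
  define b where "b = onorm (gamma_ext (cnj \<mu>))"
  define C where "C = cmod (z - \<mu>) * a * b + cmod (cnj \<mu> - \<mu>) * b\<^sup>2"
  have a: "0 \<le> a" "\<And>h. norm (gamma_ext z h) \<le> a * norm h"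
    unfolding a_def using onorm_gamma_ext_nonneg[OF z] norm_gamma_ext_le[OF z] by auto
  have b: "0 \<le> b" "\<And>h. norm (gamma_ext (cnj \<mu>) h) \<le> b * norm h"
    unfolding b_def using onorm_gamma_ext_nonneg[OF \<mu>'] norm_gamma_ext_le[OF \<mu>'] by auto
  have "norm (M0_map \<mu> z h) \<le> C * norm h" if h: "h \<in> ran\<Gamma>\<^sub>0" for h
  proof (rule norm_le_if_cinner_le_on_dense[OF ran\<Gamma>\<^sub>0_dense])
    fix k
    assume k: "k \<in> ran\<Gamma>\<^sub>0"
    have g1: "cmod (cinner (gamma_ext z h) (gamma_ext (cnj \<mu>) k)) \<le> (a * norm h) * (b * norm k)"
      by (rule order_trans[OF norm_cinner_le mult_mono[OF a(2) b(2)]]) (auto simp: a b)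
    have g2: "cmod (cinner (gamma_ext (cnj \<mu>) h) (gamma_ext (cnj \<mu>) k)) \<le> (b * norm h) * (b * norm k)"
      by (rule order_trans[OF norm_cinner_le mult_mono[OF b(2) b(2)]]) (auto simp: b)
    have t1: "cmod ((z - \<mu>) * cinner (gamma_ext z h) (gamma_ext (cnj \<mu>) k))
        \<le> cmod (z - \<mu>) * ((a * norm h) * (b * norm k))"
      unfolding norm_mult by (rule mult_left_mono[OF g1]) simp
    have t2: "cmod ((1 / 2) * ((cnj \<mu> - \<mu>) * cinner (gamma_ext (cnj \<mu>) h) (gamma_ext (cnj \<mu>) k)))
        \<le> cmod ((cnj \<mu> - \<mu>) * cinner (gamma_ext (cnj \<mu>) h) (gamma_ext (cnj \<mu>) k))"
      unfolding norm_mult by simp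
    have t3: "\<dots> \<le> cmod (cnj \<mu> - \<mu>) * ((b * norm h) * (b * norm k))"
      unfolding norm_mult by (rule mult_left_mono[OF g2]) simp
    have "cmod (cinner (M0_map \<mu> z h) k)
        \<le> cmod (z - \<mu>) * ((a * norm h) * (b * norm k)) + cmod (cnj \<mu> - \<mu>) * ((b * norm h) * (b * norm k))"
      unfolding cinner_M0_map[OF \<mu> z h k] using norm_triangle_ineq4 t1 t2 t3
      by (smt (verit))
    then show "cmod (cinner (M0_map \<mu> z h) k) \<le> C * norm h * norm k"
      by (simp add: C_def power2_eq_square algebra_simps)
  qed (simp add: C_def a b)
  then show ?thesis
    unfolding bounded_rel_def M0_def by blast
qed

lemma M0_bounded_operator:
  assumes "Im \<mu> \<noteq> 0" "Im z \<noteq> 0"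
  shows "is_operator (M0 \<mu> z)" "bounded_rel (M0 \<mu> z)" "Domain (M0 \<mu> z) = Domain (ReM ran\<Gamma>\<^sub>0 (M \<mu>))"
proof -
  have \<mu>': "Im (cnj \<mu>) \<noteq> 0"
    using assms by simp
  show "is_operator (M0 \<mu> z)"
    unfolding M0_def
    by (rule is_operator_graph_on[OF csubspace_0[OF csubspace_ran\<Gamma>\<^sub>0]])
      (simp add: M0_map_def Re_weyl_map_def weyl_map_zero assms \<mu>')
  show "bounded_rel (M0 \<mu> z)"
    by (rule bounded_M0[OF assms])
  show "Domain (M0 \<mu> z) = Domain (ReM ran\<Gamma>\<^sub>0 (M \<mu>))"
    by (simp add: Domain_M0 ReM_weyl_eq[OF assms(1)] Domain_graph_on)
qed

definition M0_ext :: "complex \<Rightarrow> complex \<Rightarrow> 'b \<Rightarrow> 'b" where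
  "M0_ext \<mu> z = closure_map (M0 \<mu> z)"

lemma closure_M0_eq_graph: "Im \<mu> \<noteq> 0 \<Longrightarrow> Im z \<noteq> 0 \<Longrightarrow> closure (M0 \<mu> z) = graph (M0_ext \<mu> z)"
  and bounded_clinear_map_M0_ext: "Im \<mu> \<noteq> 0 \<Longrightarrow> Im z \<noteq> 0 \<Longrightarrow> bounded_clinear_map (M0_ext \<mu> z)"
  unfolding M0_ext_def
  using closure_bounded_dense_graph[OF csubspace_M0 bounded_M0, of \<mu> z] ran\<Gamma>\<^sub>0_dense
  by (simp_all add: Domain_M0)

lemma M0_ext_eq:
  assumes "Im \<mu> \<noteq> 0" "Im z \<noteq> 0" "h \<in> ran\<Gamma>\<^sub>0"
  shows "M0_ext \<mu> z h = M0_map \<mu> z h"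
proof -
  have "(h, M0_map \<mu> z h) \<in> closure (M0 \<mu> z)"
    using assms(3) closure_subset by (force simp: M0_def)
  then show ?thesis
    by (simp add: closure_M0_eq_graph[OF assms(1,2)] in_graph_iff)
qed

lemma continuous_on_M0_ext: "Im \<mu> \<noteq> 0 \<Longrightarrow> Im z \<noteq> 0 \<Longrightarrow> continuous_on UNIV (M0_ext \<mu> z)"
  by (rule linear_continuous_on[OF bounded_clinear_map_imp_bounded_linear[OF bounded_clinear_map_M0_ext]])

text \<open>\<open>M\<^sub>0(w) - M\<^sub>0(z) = (w - z) \<gamma>(\<bar>z)\<^sup>* \<gamma>(w)\<close>, first on \<open>ran \<Gamma>\<^sub>0\<close> by Green's identity,
  then everywhere by continuity.\<close>
lemma cinner_M0_ext_diff:
  assumes \<mu>: "Im \<mu> \<noteq> 0" and w: "Im w \<noteq> 0" and z: "Im z \<noteq> 0"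
  shows "cinner (M0_ext \<mu> w h - M0_ext \<mu> z h) k = (w - z) * cinner (gamma_ext w h) (gamma_ext (cnj z) k)"
proof -
  have z': "Im (cnj z) \<noteq> 0"
    using z by simp
  have "cinner (M0_ext \<mu> w h - M0_ext \<mu> z h) k = (w - z) * cinner (gamma_ext w h) (gamma_ext (cnj z) k)"
    if "h \<in> ran\<Gamma>\<^sub>0" "k \<in> ran\<Gamma>\<^sub>0" for h k
    using weyl_map_Green[OF w z' that] weyl_map_cnj[OF z that] that
    by (simp add: M0_ext_eq[OF \<mu> w] M0_ext_eq[OF \<mu> z] M0_map_def cinner_diff_left)
  moreover have "continuous_on UNIV (\<lambda>h. cinner (M0_ext \<mu> w h - M0_ext \<mu> z h) k)"
    "continuous_on UNIV (\<lambda>h. (w - z) * cinner (gamma_ext w h) (gamma_ext (cnj z) k))" for k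
    by (intro continuous_on_mult continuous_on_const continuous_on_cinner continuous_on_diff
        continuous_on_M0_ext[OF \<mu> w] continuous_on_M0_ext[OF \<mu> z] continuous_on_gamma_ext[OF w])+
  ultimately have "cinner (M0_ext \<mu> w h - M0_ext \<mu> z h) k = (w - z) * cinner (gamma_ext w h) (gamma_ext (cnj z) k)"
    if "k \<in> ran\<Gamma>\<^sub>0" for h k
    using that dense_continuous_eq[OF ran\<Gamma>\<^sub>0_dense] by blast
  moreover have "continuous_on UNIV (\<lambda>k. cinner (M0_ext \<mu> w h - M0_ext \<mu> z h) k)"
    "continuous_on UNIV (\<lambda>k. (w - z) * cinner (gamma_ext w h) (gamma_ext (cnj z) k))"
    by (intro continuous_on_mult continuous_on_const continuous_on_cinner continuous_on_id
        continuous_on_gamma_ext[OF z'])+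
  ultimately show ?thesis
    using dense_continuous_eq[OF ran\<Gamma>\<^sub>0_dense] by blast
qed

definition gamma_adj :: "complex \<Rightarrow> 'a \<Rightarrow> 'b" where
  "gamma_adj \<nu> = closure_map (adj (\<gamma> \<nu>))"

lemma adj_gamma_eq_graph: "Im \<nu> \<noteq> 0 \<Longrightarrow> adj (\<gamma> \<nu>) = graph (gamma_adj \<nu>)"
  and bounded_clinear_map_gamma_adj: "Im \<nu> \<noteq> 0 \<Longrightarrow> bounded_clinear_map (gamma_adj \<nu>)"
  unfolding gamma_adj_def
  using closure_bounded_dense_graph[OF csubspace_adj bounded_adj_gamma, of \<nu>] Domain_adj_gamma[of \<nu>]
    closure_closed[OF closed_adj, of "\<gamma> \<nu>"]
  by simp_all

lemma cinner_gamma_adj: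
  assumes \<nu>: "Im \<nu> \<noteq> 0"
  shows "cinner (gamma_adj \<nu> y) k = cinner y (gamma_ext \<nu> k)"
proof -
  have "cinner (gamma_adj \<nu> y) k = cinner y (gamma_ext \<nu> k)" if "k \<in> ran\<Gamma>\<^sub>0" for k
    using adjD[of y "gamma_adj \<nu> y" "\<gamma> \<nu>", OF _ gamma_ext_in_gamma[OF \<nu> that]]
      adj_gamma_eq_graph[OF \<nu>]
    by (simp add: in_graph_iff) (metis cinner_commute)
  moreover have "continuous_on UNIV (\<lambda>k. cinner (gamma_adj \<nu> y) k)"
    "continuous_on UNIV (\<lambda>k. cinner y (gamma_ext \<nu> k))"
    by (intro continuous_on_cinner continuous_on_const continuous_on_id continuous_on_gamma_ext[OF \<nu>])+
  ultimately show ?thesis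
    using dense_continuous_eq[OF ran\<Gamma>\<^sub>0_dense] by blast
qed

definition M0_deriv :: "complex \<Rightarrow> 'b \<Rightarrow> 'b" where
  "M0_deriv z h = gamma_adj (cnj z) (gamma_ext z h)"

lemma bounded_clinear_map_M0_deriv: "Im z \<noteq> 0 \<Longrightarrow> bounded_clinear_map (M0_deriv z)"
  unfolding M0_deriv_def
  by (rule bounded_clinear_map_compose[OF bounded_clinear_map_gamma_adj bounded_clinear_map_gamma_ext])
    simp_all

text \<open>The error of the difference quotient is \<open>\<gamma>(\<bar>z)\<^sup>* (\<gamma>(w) - \<gamma>(z)) = (w - z) \<gamma>(\<bar>z)\<^sup>* (A\<^sub>0 - w)\<^sup>-\<^sup>1 \<gamma>(z)\<close>.\<close>
lemma onorm_M0_difference_quotient_error: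
  assumes \<mu>: "Im \<mu> \<noteq> 0" and w: "Im w \<noteq> 0" and z: "Im z \<noteq> 0" and "w \<noteq> z"
  shows "onorm (\<lambda>x. cscale (inverse (w - z)) (M0_ext \<mu> w x - M0_ext \<mu> z x) - M0_deriv z x)
    \<le> cmod (w - z) * onorm (gamma_ext z) * onorm (gamma_ext (cnj z)) / \<bar>Im w\<bar>"
proof (rule onorm_bound)
  have z': "Im (cnj z) \<noteq> 0"
    using z by simp
  define a where "a = onorm (gamma_ext z)"
  define b where "b = onorm (gamma_ext (cnj z))"
  have a: "0 \<le> a" "\<And>h. norm (gamma_ext z h) \<le> a * norm h"
    unfolding a_def using onorm_gamma_ext_nonneg[OF z] norm_gamma_ext_le[OF z] by auto
  have b: "0 \<le> b" "\<And>h. norm (gamma_ext (cnj z) h) \<le> b * norm h"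
    unfolding b_def using onorm_gamma_ext_nonneg[OF z'] norm_gamma_ext_le[OF z'] by auto
  show "0 \<le> cmod (w - z) * onorm (gamma_ext z) * onorm (gamma_ext (cnj z)) / \<bar>Im w\<bar>"
    using a b by (simp add: a_def b_def)
  fix x
  define r where "r = res w (gamma_ext z x)"
  have r: "norm r \<le> a * norm x / \<bar>Im w\<bar>"
    using resolvent_norm_le[OF A\<^sub>0_selfadjoint w, of "gamma_ext z x"] a(2)[of x] w
    by (simp add: r_def field_simps mult.commute)
  show "norm (cscale (inverse (w - z)) (M0_ext \<mu> w x - M0_ext \<mu> z x) - M0_deriv z x)
      \<le> cmod (w - z) * onorm (gamma_ext z) * onorm (gamma_ext (cnj z)) / \<bar>Im w\<bar> * norm x"
  proof (rule norm_le_if_cinner_le)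
    fix k
    have "cinner (cscale (inverse (w - z)) (M0_ext \<mu> w x - M0_ext \<mu> z x) - M0_deriv z x) k
        = inverse (w - z) * ((w - z) * cinner (gamma_ext w x) (gamma_ext (cnj z) k))
          - cinner (gamma_ext z x) (gamma_ext (cnj z) k)"
      by (simp only: cinner_diff_left[of "cscale _ _"] cinner_cscale_left cinner_M0_ext_diff[OF \<mu> w z]
          M0_deriv_def cinner_gamma_adj[OF z'])
    also have "\<dots> = cinner (gamma_ext w x - gamma_ext z x) (gamma_ext (cnj z) k)"
      using \<open>w \<noteq> z\<close> by (simp add: cinner_diff_left)
    also have "gamma_ext w x - gamma_ext z x = cscale (w - z) r"
      using gamma_ext_shift[OF w z] by (simp add: r_def)
    finally have "cmod (cinner (cscale (inverse (w - z)) (M0_ext \<mu> w x - M0_ext \<mu> z x) - M0_deriv z x) k)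
        \<le> (cmod (w - z) * norm r) * norm (gamma_ext (cnj z) k)"
      using norm_cinner_le by (metis norm_cscale)
    also have "\<dots> \<le> (cmod (w - z) * (a * norm x / \<bar>Im w\<bar>)) * (b * norm k)"
      by (intro mult_mono mult_left_mono r b(2)) (auto simp: a b)
    finally show "cmod (cinner (cscale (inverse (w - z)) (M0_ext \<mu> w x - M0_ext \<mu> z x) - M0_deriv z x) k)
        \<le> cmod (w - z) * onorm (gamma_ext z) * onorm (gamma_ext (cnj z)) / \<bar>Im w\<bar> * norm x * norm k"
      by (simp add: a_def b_def mult_ac)
  qed (use a b in \<open>simp add: a_def b_def\<close>)
qed

lemma M0_ext_has_derivative:
  assumes \<mu>: "Im \<mu> \<noteq> 0" and z: "Im z \<noteq> 0"
  shows "((\<lambda>w. onorm (\<lambda>x. cscale (inverse (w - z)) (M0_ext \<mu> w x - M0_ext \<mu> z x) - M0_deriv z x))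
    \<longlongrightarrow> 0) (at z)"
proof (rule tendsto_0_le[where K=1])
  define K where "K = onorm (gamma_ext z) * onorm (gamma_ext (cnj z))"
  have "((\<lambda>w. cmod (w - z) * K / \<bar>Im w\<bar>) \<longlongrightarrow> cmod (z - z) * K / \<bar>Im z\<bar>) (at z)"
    using z by (intro tendsto_intros) auto
  then show "((\<lambda>w. cmod (w - z) * K / \<bar>Im w\<bar>) \<longlongrightarrow> 0) (at z)"
    by simp
  have "open {w. Im w \<noteq> 0}"
    by (intro open_Collect_neq continuous_intros)
  then have "\<forall>\<^sub>F w in at z. w \<in> {w. Im w \<noteq> 0} - {z}"
    using z by (intro eventually_at_in_open) auto
  then show "\<forall>\<^sub>F w in at z.
      norm (onorm (\<lambda>x. cscale (inverse (w - z)) (M0_ext \<mu> w x - M0_ext \<mu> z x) - M0_deriv z x))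
      \<le> norm (cmod (w - z) * K / \<bar>Im w\<bar>) * 1"
  proof (rule eventually_mono)
    fix w
    assume "w \<in> {w. Im w \<noteq> 0} - {z}"
    then have w: "Im w \<noteq> 0" and "w \<noteq> z"
      by auto
    have "bounded_linear (\<lambda>x. cscale (inverse (w - z)) (M0_ext \<mu> w x - M0_ext \<mu> z x) - M0_deriv z x)"
      by (intro bounded_linear_sub bounded_linear_compose[OF bounded_bilinear.bounded_linear_right[OF
            bounded_bilinear_cscale]] bounded_clinear_map_imp_bounded_linear bounded_clinear_map_M0_ext
            bounded_clinear_map_M0_deriv \<mu> w z)
    then have "0 \<le> onorm (\<lambda>x. cscale (inverse (w - z)) (M0_ext \<mu> w x - M0_ext \<mu> z x) - M0_deriv z x)"
      by (rule onorm_pos_le)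
    moreover have "0 \<le> K"
      using onorm_gamma_ext_nonneg[OF z] onorm_gamma_ext_nonneg[of "cnj z"] z by (simp add: K_def)
    ultimately show "norm (onorm (\<lambda>x. cscale (inverse (w - z)) (M0_ext \<mu> w x - M0_ext \<mu> z x) - M0_deriv z x))
        \<le> norm (cmod (w - z) * K / \<bar>Im w\<bar>) * 1"
      using onorm_M0_difference_quotient_error[OF \<mu> w z \<open>w \<noteq> z\<close>]
      by (simp add: K_def mult.assoc)
  qed
qed

lemma closure_M0_cnj:
  assumes \<mu>: "Im \<mu> \<noteq> 0" and z: "Im z \<noteq> 0"
  shows "closure (M0 \<mu> (cnj z)) = adj (closure (M0 \<mu> z))"
proof -
  have z': "Im (cnj z) \<noteq> 0"
    using z by simp
  have in_adj: "(h, M0_ext \<mu> (cnj z) h) \<in> adj (M0 \<mu> z)" for h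
  proof (rule adjI)
    fix k v
    assume "(k, v) \<in> M0 \<mu> z"
    then have k: "k \<in> ran\<Gamma>\<^sub>0" and v: "v = M0_map \<mu> z k"
      by (auto simp: M0_def)
    have "cinner (M0_map \<mu> z k) h = cinner k (M0_ext \<mu> (cnj z) h)" if h: "h \<in> ran\<Gamma>\<^sub>0" for h
      unfolding M0_ext_eq[OF \<mu> z' h] M0_map_def cinner_diff_left cinner_diff_right
        weyl_map_cnj[OF z k h] Re_weyl_map_symmetric[OF \<mu> h k] ..
    moreover have "continuous_on UNIV (\<lambda>h. cinner (M0_map \<mu> z k) h)"
      "continuous_on UNIV (\<lambda>h. cinner k (M0_ext \<mu> (cnj z) h))"
      by (intro continuous_on_cinner continuous_on_const continuous_on_id continuous_on_M0_ext[OF \<mu> z'])+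
    ultimately show "cinner v h = cinner k (M0_ext \<mu> (cnj z) h)"
      using dense_continuous_eq[OF ran\<Gamma>\<^sub>0_dense] v by blast
  qed
  have "adj (M0 \<mu> z) = graph (M0_ext \<mu> (cnj z))"
  proof
    show "graph (M0_ext \<mu> (cnj z)) \<subseteq> adj (M0 \<mu> z)"
      using in_adj by (auto simp: graph_def)
    have "closure (Domain (M0 \<mu> z)) = UNIV"
      using ran\<Gamma>\<^sub>0_dense by (simp add: Domain_M0)
    then show "adj (M0 \<mu> z) \<subseteq> graph (M0_ext \<mu> (cnj z))"
      using adj_single_valued in_adj by (fastforce simp: in_graph_iff)
  qed
  then show ?thesis
    using closure_M0_eq_graph[OF \<mu> z'] by (simp add: adj_closure)
qed

text \<open>\<open>Im \<langle>M\<^sub>0(z) h, h\<rangle> = Im z \<parallel>\<gamma>(z) h\<parallel>\<^sup>2\<close>, since \<open>Re M(\<mu>)\<close> is symmetric.\<close>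
lemma Im_cinner_M0_ext_nonneg:
  assumes \<mu>: "Im \<mu> \<noteq> 0" and z: "Im z > 0"
  shows "0 \<le> Im (cinner (M0_ext \<mu> z h) h)"
proof -
  have z0: "Im z \<noteq> 0"
    using z by simp
  have "Im (cinner (M0_ext \<mu> z h) h) = Im z * (norm (gamma_ext z h))\<^sup>2" if h: "h \<in> ran\<Gamma>\<^sub>0" for h
  proof -
    define a where "a = cinner (weyl_map z h) h"
    have "a - cnj a = (z - cnj z) * cinner (gamma_ext z h) (gamma_ext z h)"
      using weyl_map_Green[OF z0 z0 h h] by (simp add: a_def cinner_commute[of h "weyl_map z h"])
    then have "complex_of_real (Im a) = complex_of_real (Im z * (norm (gamma_ext z h))\<^sup>2)"
      by (simp add: complex_diff_cnj cinner_norm)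
    then have "Im a = Im z * (norm (gamma_ext z h))\<^sup>2"
      using of_real_eq_iff by blast
    moreover have "Im (cinner (Re_weyl_map \<mu> h) h) = 0"
      using Re_weyl_map_symmetric[OF \<mu> h h] by (rule Im_cinner_eq_zero_if_symmetric)
    ultimately show ?thesis
      by (simp add: M0_ext_eq[OF \<mu> z0 h] M0_map_def cinner_diff_left a_def)
  qed
  moreover have "continuous_on UNIV (\<lambda>h. Im (cinner (M0_ext \<mu> z h) h))"
    "continuous_on UNIV (\<lambda>h. Im z * (norm (gamma_ext z h))\<^sup>2)"
    by (intro continuous_on_Im continuous_on_mult continuous_on_power continuous_on_norm
        continuous_on_cinner continuous_on_const continuous_on_id continuous_on_M0_ext[OF \<mu> z0]
        continuous_on_gamma_ext[OF z0])+
  ultimately have "Im (cinner (M0_ext \<mu> z h) h) = Im z * (norm (gamma_ext z h))\<^sup>2"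
    using dense_continuous_eq[OF ran\<Gamma>\<^sub>0_dense] by blast
  then show ?thesis
    using z by simp
qed

lemma nevanlinna_closure_M0:
  assumes \<mu>: "Im \<mu> \<noteq> 0"
  shows "nevanlinna (\<lambda>z. closure (M0 \<mu> z))"
  unfolding nevanlinna_def
proof (intro exI[of _ "M0_ext \<mu>"] conjI)
  show "\<forall>z. Im z \<noteq> 0 \<longrightarrow> closure (M0 \<mu> z) = graph (M0_ext \<mu> z) \<and> bounded_clinear_map (M0_ext \<mu> z)"
    using closure_M0_eq_graph[OF \<mu>] bounded_clinear_map_M0_ext[OF \<mu>] by blast
  show "\<forall>z. Im z \<noteq> 0 \<longrightarrow> (\<exists>D. bounded_clinear_map D \<and>
      ((\<lambda>w. onorm (\<lambda>x. cscale (inverse (w - z)) (M0_ext \<mu> w x - M0_ext \<mu> z x) - D x)) \<longlongrightarrow> 0) (at z))"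
    using bounded_clinear_map_M0_deriv M0_ext_has_derivative[OF \<mu>] by blast
  show "\<forall>z. Im z \<noteq> 0 \<longrightarrow> closure (M0 \<mu> (cnj z)) = adj (closure (M0 \<mu> z))"
    using closure_M0_cnj[OF \<mu>] by blast
  show "\<forall>z. 0 < Im z \<longrightarrow> (\<forall>h. 0 \<le> Im (cinner (M0_ext \<mu> z h) h))"
    using Im_cinner_M0_ext_nonneg[OF \<mu>] by blast
qed
end

theorem mainTheorem3:
  fixes A :: "('a::chilbert \<times> 'a) set"
    and \<Gamma> :: "(('a \<times> 'a) \<times> ('b::chilbert \<times> 'b)) set"
  assumes "closed_symmetric A"
    and "AB_boundary_pair A \<Gamma>"
  shows
    \<comment> \<open>(i)\<close>
    "kerr \<Gamma> = A \<and>
    \<comment> \<open>(ii)\<close>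
     (\<forall>\<zeta>. Im \<zeta> \<noteq> 0 \<longrightarrow>
        Domain \<Gamma> = rsum (bpA0 \<Gamma>) (Nhat \<zeta> (Domain \<Gamma>)) \<and>
        Nhat \<zeta> (adj A) \<subseteq> closure (Nhat \<zeta> (Domain \<Gamma>))) \<and>
    \<comment> \<open>(iii)\<close>
     (\<forall>\<zeta>. Im \<zeta> \<noteq> 0 \<longrightarrow>
        is_operator (gammaf \<Gamma> \<zeta>) \<and> bounded_rel (gammaf \<Gamma> \<zeta>) \<and>
        closure (Domain (gammaf \<Gamma> \<zeta>)) = UNIV \<and>
        Domain (gammaf \<Gamma> \<zeta>) = Range (bp0 \<Gamma>) \<and>
        Range (gammaf \<Gamma> \<zeta>) = Nker \<zeta> (Domain \<Gamma>) \<and>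
        kerr (gammaf \<Gamma> \<zeta>) = mulr (bp0 \<Gamma>)) \<and>
    \<comment> \<open>(iv)\<close>
     (\<forall>\<zeta>. Im \<zeta> \<noteq> 0 \<longrightarrow>
        is_operator (adj (gammaf \<Gamma> \<zeta>)) \<and> bounded_rel (adj (gammaf \<Gamma> \<zeta>)) \<and>
        Domain (adj (gammaf \<Gamma> \<zeta>)) = UNIV \<and>
        Hrel (bpA0 \<Gamma>) \<zeta> O \<Gamma> =
          rsum {(k, (0, k')) | k k'. (k, k') \<in> adj (gammaf \<Gamma> (cnj \<zeta>))} ({0} \<times> mulr \<Gamma>) \<and>
        Hrel (bpA0 \<Gamma>) \<zeta> O bp1 \<Gamma> =
          rsum (adj (gammaf \<Gamma> (cnj \<zeta>))) ({0} \<times> mulr (bp1 \<Gamma>))) \<and>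
    \<comment> \<open>(v)\<close>
     (\<forall>\<zeta>. Im \<zeta> \<noteq> 0 \<longrightarrow>
        is_operator (closure (gammaf \<Gamma> \<zeta>)) \<and> bounded_rel (closure (gammaf \<Gamma> \<zeta>)) \<and>
        Domain (closure (gammaf \<Gamma> \<zeta>)) = UNIV \<and>
        Range (closure (gammaf \<Gamma> \<zeta>)) \<subseteq> Nker \<zeta> (adj A)) \<and>
     (\<forall>\<zeta> \<mu>. Im \<zeta> \<noteq> 0 \<longrightarrow> Im \<mu> \<noteq> 0 \<longrightarrow>
        closure (gammaf \<Gamma> \<zeta>) =
          closure (gammaf \<Gamma> \<mu>) O opsum Id (smult_rel (\<zeta> - \<mu>) (resolv (bpA0 \<Gamma>) \<zeta>))) \<and>
    \<comment> \<open>(vi)\<close>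
     (\<forall>\<zeta>. Im \<zeta> \<noteq> 0 \<longrightarrow>
        is_operator (weyl \<Gamma> \<zeta>) \<and> closure (Domain (weyl \<Gamma> \<zeta>)) = UNIV \<and>
        Domain (weyl \<Gamma> \<zeta>) = Range (bp0 \<Gamma>) \<and>
        weyl \<Gamma> \<zeta> \<subseteq> adj (weyl \<Gamma> (cnj \<zeta>)) \<and>
        is_operator (ImM (Range (bp0 \<Gamma>)) (weyl \<Gamma> \<zeta>)) \<and>
        bounded_rel (ImM (Range (bp0 \<Gamma>)) (weyl \<Gamma> \<zeta>)) \<and>
        kerr (ImM (Range (bp0 \<Gamma>)) (weyl \<Gamma> \<zeta>)) = mulr (bp0 \<Gamma>)) \<and>
     (\<forall>\<mu>. Im \<mu> \<noteq> 0 \<longrightarrow>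
        (let E = ReM (Range (bp0 \<Gamma>)) (weyl \<Gamma> \<mu>) in
          is_operator E \<and> closure (Domain E) = UNIV \<and> E \<subseteq> adj E \<and>
          (\<exists>M0. (\<forall>\<zeta>. Im \<zeta> \<noteq> 0 \<longrightarrow>
                    weyl \<Gamma> \<zeta> = opsum E (M0 \<zeta>) \<and> is_operator (M0 \<zeta>) \<and>
                    bounded_rel (M0 \<zeta>) \<and> Domain (M0 \<zeta>) = Domain E) \<and>
                 nevanlinna (\<lambda>z. closure (M0 z)))))"
proof -
  interpret AB_generalized_boundary_pair A \<Gamma>
    using assms by unfold_locales
  show ?thesis
    unfolding Let_def
  proof (intro conjI allI impI)
    fix \<mu> :: complex
    assume \<mu>: "Im \<mu> \<noteq> 0"
    show "\<exists>M0'. (\<forall>\<zeta>. Im \<zeta> \<noteq> 0 \<longrightarrow> weyl \<Gamma> \<zeta> = opsum (ReM ran\<Gamma>\<^sub>0 (M \<mu>)) (M0' \<zeta>) \<and>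
        is_operator (M0' \<zeta>) \<and> bounded_rel (M0' \<zeta>) \<and> Domain (M0' \<zeta>) = Domain (ReM ran\<Gamma>\<^sub>0 (M \<mu>)))
      \<and> nevanlinna (\<lambda>z. closure (M0' z))"
      using weyl_eq_opsum_M0[OF \<mu>] M0_bounded_operator[OF \<mu>] nevanlinna_closure_M0[OF \<mu>]
      by (intro exI[of _ "M0 \<mu>"]) blast
  qed (intro kerr_\<Gamma> Domain_\<Gamma>_decomposition Nhat_adj_subset_closure is_operator_gamma bounded_gamma
      dense_Domain_gamma Domain_gamma Range_gamma kerr_gamma is_operator_adj_gamma bounded_adj_gamma
      Domain_adj_gamma Hrel_comp_\<Gamma> Hrel_comp_bp1 closure_gamma_bounded_operator Range_closure_gamma
      closure_gamma_shift is_operator_weyl dense_Domain_weyl Domain_weyl weyl_subset_adj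
      ImM_weyl_properties ReM_weyl_properties; assumption)+
qed

end
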